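(* Let $(\eta_k)_{k\in\mathbb N}$ be i.i.d. real random variables with $\mathbb{E}\eta_1=0$ and $\sigma_1^2=\mathbb{E}\eta_1^2\in(0,\infty)$, and let $\alpha>-1/2$. Then $$\Big(\frac{(2s)^{1+2\alpha}}{\Gamma(1+2\alpha)\sigma_1^2}\Big)^{1/2}\sum_{k\ge2}\frac{(\log k)^\alpha}{k^{1/2+s}}\eta_k\ \xrightarrow{d}\ \mathcal{N}(0,1),\qquad s\to0+,$$ where $\mathcal{N}(0,1)$ denotes a standard normal random variable.
   Context: For each $s>0$ the series $\sum_{k\ge2}(\log k)^\alpha k^{-1/2-s}\eta_k$ converges a.s. *)

theory Defs
  imports "HOL-Probability.Probability"
begin

text \<open>Convergence in distribution of a family of real probability measures along a filter:
  the library notion weak_conv_m (cdf convergence at continuity points of the limit cdf),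
  generalised from sequences to an arbitrary filter (here: s tending to 0 from the right).\<close>
definition weak_conv_filter :: "('b \<Rightarrow> real measure) \<Rightarrow> real measure \<Rightarrow> 'b filter \<Rightarrow> bool" where
  "weak_conv_filter Ms N F \<equiv>
     \<forall>x. isCont (cdf N) x \<longrightarrow> ((\<lambda>s. cdf (Ms s) x) \<longlongrightarrow> cdf N x) F"

end

theory Submission
  imports Defs
begin

text \<open>
  For \<open>s > 0\<close> the series converges almost surely by Kolmogorov's criterion, since its variance
  \<open>\<sigma>\<^sub>1\<^sup>2 \<Sum>\<^sub>k (ln k) powr (2\<alpha>) / k powr (1 + 2s)\<close> is finite. Its characteristic function is the limit
  of finite products of characteristic functions of the scaled \<open>\<eta>\<^sub>k\<close>; a second-order expansion of each
  factor shows that it differs from \<open>exp (- t\<^sup>2 \<rho>\<^sub>s / 2)\<close>, where \<open>\<rho>\<^sub>s\<close> is the normalised variance, by at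
  most \<open>t\<^sup>2 \<rho>\<^sub>s\<close> times a quantity that vanishes with the largest normalised weight. Comparing
  \<open>\<Sum>\<^sub>k (ln k) powr \<beta> / k powr (1 + p)\<close> with the integral of \<open>(ln x) powr \<beta> / x powr (1 + p)\<close>, an
  incomplete Gamma function \<open>p powr (-1 - \<beta>) \<Gamma>(1 + \<beta>, p ln N)\<close>, shows that the series equals
  \<open>\<Gamma>(1 + \<beta>) p powr (-1 - \<beta>) + O(1)\<close> as \<open>p \<rightarrow> 0+\<close>. With \<open>\<beta> = 2\<alpha>\<close> and \<open>p = 2s\<close> this gives
  \<open>\<rho>\<^sub>s \<rightarrow> 1\<close>, while the normalised weights are \<open>O(s powr (1/2 + \<alpha>))\<close>. Levy's continuity theorem,
  applied along sequences \<open>s\<^sub>n \<rightarrow> 0+\<close>, turns the convergence of characteristic functions into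
  convergence in distribution.
\<close>

section \<open>Kolmogorov's maximal inequality and convergence criterion\<close>

lemma integrable_mult_of_square_integrable:
  fixes f g :: "'a \<Rightarrow> real"
  assumes [measurable]: "f \<in> borel_measurable M" "g \<in> borel_measurable M"
    and "integrable M (\<lambda>x. (f x)\<^sup>2)" "integrable M (\<lambda>x. (g x)\<^sup>2)"
  shows "integrable M (\<lambda>x. f x * g x)"
proof (rule Bochner_Integration.integrable_bound)
  show "integrable M (\<lambda>x. (f x)\<^sup>2 + (g x)\<^sup>2)"
    using assms by simp
  have "\<bar>a * b\<bar> \<le> a\<^sup>2 + b\<^sup>2" for a b :: real
    using sum_squares_bound[of "\<bar>a\<bar>" "\<bar>b\<bar>"] mult_nonneg_nonneg[OF abs_ge_zero abs_ge_zero, of a b]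
    by (simp only: abs_mult power2_abs mult.assoc)
  then show "AE x in M. norm (f x * g x) \<le> norm ((f x)\<^sup>2 + (g x)\<^sup>2)"
    by simp
qed simp

lemma integrable_square_sum:
  fixes X :: "'i \<Rightarrow> 'a \<Rightarrow> real"
  assumes [measurable]: "\<And>i. X i \<in> borel_measurable M"
    and "\<And>i. integrable M (\<lambda>x. (X i x)\<^sup>2)"
  shows "integrable M (\<lambda>x. (\<Sum>i\<in>I. X i x)\<^sup>2)"
proof -
  have "integrable M (\<lambda>x. \<Sum>i\<in>I. \<Sum>k\<in>I. X i x * X k x)"
    using assms by (intro Bochner_Integration.integrable_sum integrable_mult_of_square_integrable) auto
  then show ?thesis
    by (simp add: power2_eq_square sum_product)
qed

lemma summable_if_tail_sums_small:
  fixes f :: "nat \<Rightarrow> real"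
  assumes small: "\<And>e. 0 < e \<Longrightarrow> \<exists>m. \<forall>j>m. \<bar>\<Sum>i\<in>{m..<j}. f i\<bar> < e"
  shows "summable f"
  unfolding summable_Cauchy
proof (intro allI impI)
  fix e :: real assume "0 < e"
  then obtain m where m: "\<forall>j>m. \<bar>\<Sum>i\<in>{m..<j}. f i\<bar> < e / 2"
    using small[of "e / 2"] by auto
  have "norm (\<Sum>i\<in>{p..<n}. f i) < e" if "Suc m \<le> p" for p n
  proof (cases "p \<le> n")
    case True
    then have "(\<Sum>i\<in>{m..<p}. f i) + (\<Sum>i\<in>{p..<n}. f i) = (\<Sum>i\<in>{m..<n}. f i)"
      using that by (intro sum.atLeastLessThan_concat) auto
    moreover have "\<bar>\<Sum>i\<in>{m..<n}. f i\<bar> < e / 2" "\<bar>\<Sum>i\<in>{m..<p}. f i\<bar> < e / 2"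
      using m that True by auto
    ultimately show ?thesis
      by (simp add: abs_less_iff) linarith
  qed (use \<open>0 < e\<close> in simp)
  then show "\<exists>N. \<forall>p\<ge>N. \<forall>n. norm (\<Sum>i\<in>{p..<n}. f i) < e"
    by blast
qed

lemma first_passage_Union:
  fixes P :: "nat \<Rightarrow> 'a \<Rightarrow> bool" and J :: "nat set" and S :: "'a set"
  defines "A \<equiv> \<lambda>j. {x\<in>S. P j x \<and> (\<forall>l\<in>J. l < j \<longrightarrow> \<not> P l x)}"
  shows "{x\<in>S. \<exists>j\<in>J. P j x} = (\<Union>j\<in>J. A j)" and "disjoint_family_on A J"
proof -
  show "disjoint_family_on A J"
    unfolding disjoint_family_on_def
  proof (intro ballI impI)
    fix j k assume "j \<in> J" "k \<in> J" "j \<noteq> k"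
    then consider "j < k" | "k < j" by linarith
    then show "A j \<inter> A k = {}"
      unfolding A_def using \<open>j \<in> J\<close> \<open>k \<in> J\<close> by cases blast+
  qed
  have first: "\<exists>j\<in>J. x \<in> A j" if "x \<in> S" "j \<in> J" "P j x" for j x
  proof -
    have "(LEAST j. j \<in> J \<and> P j x) \<in> J \<and> P (LEAST j. j \<in> J \<and> P j x) x"
      by (rule LeastI[of _ j]) (use that in blast)
    moreover have "\<not> P l x" if "l \<in> J" "l < (LEAST j. j \<in> J \<and> P j x)" for l
      using not_less_Least[OF that(2)] that(1) by blast
    ultimately show ?thesis
      unfolding A_def using \<open>x \<in> S\<close> by blast
  qed
  show "{x\<in>S. \<exists>j\<in>J. P j x} = (\<Union>j\<in>J. A j)"
  proof (intro equalityI subsetI)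
    fix x assume "x \<in> {x\<in>S. \<exists>j\<in>J. P j x}"
    then obtain j where "x \<in> S" "j \<in> J" "P j x" by blast
    then show "x \<in> (\<Union>j\<in>J. A j)"
      using first by blast
  qed (auto simp: A_def)
qed

context prob_space
begin

lemma indep_sets_reindex:
  assumes "inj_on f I" and "indep_sets F (f ` I)"
  shows "indep_sets (\<lambda>i. F (f i)) I"
proof (rule indep_setsI)
  show "F (f i) \<subseteq> events" if "i \<in> I" for i
    using assms(2) that unfolding indep_sets_def by blast
  fix A J assume J: "J \<noteq> {}" "J \<subseteq> I" "finite J" and A: "\<forall>j\<in>J. A j \<in> F (f j)"
  define B where "B = (\<lambda>y. A (the_inv_into J f y))"
  have inj: "inj_on f J"
    using assms(1) J(2) by (rule inj_on_subset)
  have B: "B (f j) = A j" if "j \<in> J" for j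
    unfolding B_def using inj that by (simp add: the_inv_into_f_f)
  have "prob (\<Inter>y\<in>f ` J. B y) = (\<Prod>y\<in>f ` J. prob (B y))"
    using J A B by (intro indep_setsD[OF assms(2)]) auto
  then show "prob (\<Inter>j\<in>J. A j) = (\<Prod>j\<in>J. prob (A j))"
    using B by (simp add: prod.reindex[OF inj])
qed

lemma indep_vars_reindex:
  assumes "inj_on f I" and "indep_vars M' X (f ` I)"
  shows "indep_vars (\<lambda>i. M' (f i)) (\<lambda>i. X (f i)) I"
  using assms indep_sets_reindex[OF assms(1), of "\<lambda>i. {X i -` A \<inter> space M | A. A \<in> sets (M' i)}"]
  unfolding indep_vars_def2 by auto

lemma indep_vars_shift:
  fixes M' :: "nat \<Rightarrow> 'b measure" and X :: "nat \<Rightarrow> 'a \<Rightarrow> 'b" and m :: nat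
  assumes "indep_vars M' X UNIV"
  shows "indep_vars (\<lambda>k. M' (k + m)) (\<lambda>k. X (k + m)) UNIV"
proof (rule indep_vars_reindex)
  show "inj_on (\<lambda>k. k + m) UNIV"
    by (rule inj_onI) simp
  show "indep_vars M' X ((\<lambda>k. k + m) ` UNIV)"
    using indep_vars_subset[OF assms] by simp
qed

lemma indep_vars_expectation_restrict_mult:
  fixes X :: "nat \<Rightarrow> 'a \<Rightarrow> real" and f g :: "(nat \<Rightarrow> real) \<Rightarrow> real"
  assumes indep: "indep_vars (\<lambda>_. borel) X UNIV" and AB: "A \<inter> B = {}"
    and f[measurable]: "f \<in> borel_measurable (PiM A (\<lambda>_. borel))"
    and g[measurable]: "g \<in> borel_measurable (PiM B (\<lambda>_. borel))"
    and intf: "integrable M (\<lambda>\<omega>. f (\<lambda>i\<in>A. X i \<omega>))"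
    and intg: "integrable M (\<lambda>\<omega>. g (\<lambda>i\<in>B. X i \<omega>))"
  shows "expectation (\<lambda>\<omega>. f (\<lambda>i\<in>A. X i \<omega>) * g (\<lambda>i\<in>B. X i \<omega>)) =
         expectation (\<lambda>\<omega>. f (\<lambda>i\<in>A. X i \<omega>)) * expectation (\<lambda>\<omega>. g (\<lambda>i\<in>B. X i \<omega>))"
proof -
  have "indep_var (PiM A (\<lambda>_. borel)) (\<lambda>\<omega>. \<lambda>i\<in>A. X i \<omega>) (PiM B (\<lambda>_. borel)) (\<lambda>\<omega>. \<lambda>i\<in>B. X i \<omega>)"
    by (rule indep_var_restrict[OF indep AB]) auto
  then have "indep_var borel (f \<circ> (\<lambda>\<omega>. \<lambda>i\<in>A. X i \<omega>)) borel (g \<circ> (\<lambda>\<omega>. \<lambda>i\<in>B. X i \<omega>))"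
    by (rule indep_var_compose) fact+
  then show ?thesis
    using intf intg by (subst indep_var_lebesgue_integral) (simp_all add: comp_def)
qed

lemma expectation_mult_later_sum_eq_0:
  fixes X :: "nat \<Rightarrow> 'a \<Rightarrow> real" and f :: "(nat \<Rightarrow> real) \<Rightarrow> real"
  assumes indep: "indep_vars (\<lambda>_. borel) X UNIV"
    and intX: "\<And>i. integrable M (X i)" and mean: "\<And>i. expectation (X i) = 0"
    and f: "f \<in> borel_measurable (PiM {m..<j} (\<lambda>_. borel))"
    and intf: "integrable M (\<lambda>\<omega>. f (\<lambda>i\<in>{m..<j}. X i \<omega>))"
  shows "expectation (\<lambda>\<omega>. f (\<lambda>i\<in>{m..<j}. X i \<omega>) * (\<Sum>i\<in>{j..<N}. X i \<omega>)) = 0"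
proof -
  have sum_restrict: "(\<Sum>i\<in>{j..<N}. (\<lambda>i\<in>{j..<N}. X i \<omega>) i) = (\<Sum>i\<in>{j..<N}. X i \<omega>)" for \<omega>
    by (rule sum.cong) auto
  have "expectation (\<lambda>\<omega>. f (\<lambda>i\<in>{m..<j}. X i \<omega>) * (\<lambda>x. \<Sum>i\<in>{j..<N}. x i) (\<lambda>i\<in>{j..<N}. X i \<omega>))
      = expectation (\<lambda>\<omega>. f (\<lambda>i\<in>{m..<j}. X i \<omega>)) * expectation (\<lambda>\<omega>. \<Sum>i\<in>{j..<N}. X i \<omega>)"
    by (subst indep_vars_expectation_restrict_mult[OF indep _ f])
       (use intf intX in \<open>auto simp: sum_restrict intro!: borel_measurable_sum measurable_component_singleton\<close>)
  also have "expectation (\<lambda>\<omega>. \<Sum>i\<in>{j..<N}. X i \<omega>) = 0"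
    using intX mean by (simp add: Bochner_Integration.integral_sum)
  finally show ?thesis
    by (simp only: sum_restrict mult_zero_right)
qed

lemma expectation_square_sum_indep:
  fixes X :: "nat \<Rightarrow> 'a \<Rightarrow> real"
  assumes indep: "indep_vars (\<lambda>_. borel) X UNIV"
    and int2: "\<And>i. integrable M (\<lambda>\<omega>. (X i \<omega>)\<^sup>2)"
    and mean: "\<And>i. expectation (X i) = 0"
  shows "expectation (\<lambda>\<omega>. (\<Sum>i\<in>{m..<n}. X i \<omega>)\<^sup>2) = (\<Sum>i\<in>{m..<n}. expectation (\<lambda>\<omega>. (X i \<omega>)\<^sup>2))"
proof (induction n)
  case (Suc n)
  have rv[measurable]: "\<And>i. X i \<in> borel_measurable M"
    using indep unfolding indep_vars_def2 by simp
  have intX: "\<And>i. integrable M (X i)"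
    by (rule square_integrable_imp_integrable[OF _ int2]) simp
  show ?case
  proof (cases "m \<le> n")
    case True
    define T where "T \<omega> = (\<Sum>i\<in>{m..<n}. X i \<omega>)" for \<omega>
    have T2: "integrable M (\<lambda>\<omega>. (T \<omega>)\<^sup>2)"
      unfolding T_def by (rule integrable_square_sum[OF rv int2])
    have TX: "integrable M (\<lambda>\<omega>. T \<omega> * X n \<omega>)"
      by (rule integrable_mult_of_square_integrable[OF _ _ T2 int2]) (simp_all add: T_def)
    have "expectation (\<lambda>\<omega>. (\<lambda>x. \<Sum>i\<in>{m..<n}. x i) (\<lambda>i\<in>{m..<n}. X i \<omega>) * (\<Sum>i\<in>{n..<Suc n}. X i \<omega>)) = 0"
      by (rule expectation_mult_later_sum_eq_0[OF indep intX mean])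
         (use intX in \<open>auto simp: T_def intro!: borel_measurable_sum measurable_component_singleton\<close>)
    then have cross: "expectation (\<lambda>\<omega>. T \<omega> * X n \<omega>) = 0"
      by (simp add: T_def)
    have "(\<Sum>i\<in>{m..<Suc n}. X i \<omega>)\<^sup>2 = (T \<omega>)\<^sup>2 + 2 * (T \<omega> * X n \<omega>) + (X n \<omega>)\<^sup>2" for \<omega>
      using True by (simp add: T_def power2_sum)
    then have "expectation (\<lambda>\<omega>. (\<Sum>i\<in>{m..<Suc n}. X i \<omega>)\<^sup>2)
        = expectation (\<lambda>\<omega>. (T \<omega>)\<^sup>2) + expectation (\<lambda>\<omega>. (X n \<omega>)\<^sup>2)"
      using T2 TX int2 cross by simp
    then show ?thesis
      using Suc True by (simp add: T_def)
  qed (use Suc in simp)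
qed simp

text \<open>The submartingale property of the squared partial sums, tested on an event of the first
  block of variables.\<close>
lemma expectation_indicator_square_sum_mono:
  fixes X :: "nat \<Rightarrow> 'a \<Rightarrow> real" and P :: "(nat \<Rightarrow> real) \<Rightarrow> bool"
  assumes indep: "indep_vars (\<lambda>_. borel) X UNIV"
    and int2: "\<And>i. integrable M (\<lambda>\<omega>. (X i \<omega>)\<^sup>2)"
    and mean: "\<And>i. expectation (X i) = 0"
    and P[measurable]: "Measurable.pred (PiM {m..<j} (\<lambda>_. borel)) P"
    and mjN: "m \<le> j" "j \<le> N"
  defines "A \<equiv> {\<omega>\<in>space M. P (\<lambda>i\<in>{m..<j}. X i \<omega>)}"
  shows "expectation (\<lambda>\<omega>. indicator A \<omega> * (\<Sum>i\<in>{m..<j}. X i \<omega>)\<^sup>2)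
       \<le> expectation (\<lambda>\<omega>. indicator A \<omega> * (\<Sum>i\<in>{m..<N}. X i \<omega>)\<^sup>2)"
proof -
  have rv[measurable]: "\<And>i. X i \<in> borel_measurable M"
    using indep unfolding indep_vars_def2 by simp
  have intX: "\<And>i. integrable M (X i)"
    by (rule square_integrable_imp_integrable[OF _ int2]) simp
  have [measurable]: "A \<in> sets M"
    unfolding A_def by measurable
  define I :: "'a \<Rightarrow> real" where "I = indicator A"
  define T where "T \<omega> = (\<Sum>i\<in>{m..<j}. X i \<omega>)" for \<omega>
  define D where "D \<omega> = (\<Sum>i\<in>{j..<N}. X i \<omega>)" for \<omega>
  have [measurable]: "I \<in> borel_measurable M" "T \<in> borel_measurable M" "D \<in> borel_measurable M"
    unfolding I_def T_def D_def by measurable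
  have I01: "I \<omega> = 0 \<or> I \<omega> = 1" for \<omega>
    by (simp add: I_def indicator_def)
  have split: "(\<Sum>i\<in>{m..<N}. X i \<omega>) = T \<omega> + D \<omega>" for \<omega>
    unfolding T_def D_def using mjN by (simp add: sum.atLeastLessThan_concat)
  have IT2': "integrable M (\<lambda>\<omega>. I \<omega> * (T \<omega>)\<^sup>2)" and ID2: "integrable M (\<lambda>\<omega>. I \<omega> * (D \<omega>)\<^sup>2)"
    using integrable_real_mult_indicator[OF _ integrable_square_sum[OF rv int2], of A]
    by (simp_all add: I_def T_def D_def mult.commute)
  have sq: "(I \<omega> * T \<omega>)\<^sup>2 = I \<omega> * (T \<omega>)\<^sup>2" for \<omega>
    using I01[of \<omega>] by auto
  have IT2: "integrable M (\<lambda>\<omega>. (I \<omega> * T \<omega>)\<^sup>2)"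
    using IT2' by (simp only: sq)
  have "integrable M (\<lambda>\<omega>. (D \<omega>)\<^sup>2)"
    unfolding D_def by (rule integrable_square_sum[OF rv int2])
  then have ITD: "integrable M (\<lambda>\<omega>. I \<omega> * T \<omega> * D \<omega>)"
    using integrable_mult_of_square_integrable[OF _ _ IT2] by simp
  define f where "f x = (if P x then \<Sum>i\<in>{m..<j}. x i else 0)" for x :: "nat \<Rightarrow> real"
  have fX: "f (\<lambda>i\<in>{m..<j}. X i \<omega>) = I \<omega> * T \<omega>" if "\<omega> \<in> space M" for \<omega>
    using that by (auto simp: f_def I_def A_def T_def intro!: sum.cong)
  have "expectation (\<lambda>\<omega>. f (\<lambda>i\<in>{m..<j}. X i \<omega>) * D \<omega>) = 0"
    unfolding D_def
  proof (rule expectation_mult_later_sum_eq_0[OF indep intX mean])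
    show "f \<in> borel_measurable (PiM {m..<j} (\<lambda>_. borel))"
      unfolding f_def by measurable
    have "integrable M (\<lambda>\<omega>. I \<omega> * T \<omega>)"
      by (rule square_integrable_imp_integrable[OF _ IT2]) simp
    then show "integrable M (\<lambda>\<omega>. f (\<lambda>i\<in>{m..<j}. X i \<omega>))"
      by (rule Bochner_Integration.integrable_cong[THEN iffD1, rotated 2]) (simp_all add: fX)
  qed
  then have cross: "expectation (\<lambda>\<omega>. I \<omega> * T \<omega> * D \<omega>) = 0"
    by (subst (asm) Bochner_Integration.integral_cong[OF refl, where g="\<lambda>\<omega>. I \<omega> * T \<omega> * D \<omega>"])
       (simp_all add: fX)
  have "I \<omega> * (T \<omega> + D \<omega>)\<^sup>2 = (I \<omega> * T \<omega>)\<^sup>2 + 2 * (I \<omega> * T \<omega> * D \<omega>) + I \<omega> * (D \<omega>)\<^sup>2" for \<omega>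
    using I01[of \<omega>] by (auto simp: power2_sum)
  then have "expectation (\<lambda>\<omega>. I \<omega> * (\<Sum>i\<in>{m..<N}. X i \<omega>)\<^sup>2)
      = expectation (\<lambda>\<omega>. (I \<omega> * T \<omega>)\<^sup>2) + expectation (\<lambda>\<omega>. I \<omega> * (D \<omega>)\<^sup>2)"
    using IT2 ITD ID2 cross by (simp add: split)
  moreover have "0 \<le> expectation (\<lambda>\<omega>. I \<omega> * (D \<omega>)\<^sup>2)"
    by (rule integral_nonneg_AE) (simp add: I_def)
  ultimately have "expectation (\<lambda>\<omega>. I \<omega> * (T \<omega>)\<^sup>2) \<le> expectation (\<lambda>\<omega>. I \<omega> * (\<Sum>i\<in>{m..<N}. X i \<omega>)\<^sup>2)"
    by (simp add: sq)
  then show ?thesis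
    by (simp add: I_def T_def)
qed

lemma first_block_event_prob_le:
  fixes X :: "nat \<Rightarrow> 'a \<Rightarrow> real" and P :: "(nat \<Rightarrow> real) \<Rightarrow> bool"
  assumes indep: "indep_vars (\<lambda>_. borel) X UNIV"
    and int2: "\<And>i. integrable M (\<lambda>\<omega>. (X i \<omega>)\<^sup>2)"
    and mean: "\<And>i. expectation (X i) = 0"
    and P[measurable]: "Measurable.pred (PiM {m..<j} (\<lambda>_. borel)) P"
    and mjN: "m \<le> j" "j \<le> N"
    and P_large: "\<And>x. P x \<Longrightarrow> \<epsilon> \<le> \<bar>\<Sum>i\<in>{m..<j}. x i\<bar>" and eps: "0 \<le> \<epsilon>"
  defines "A \<equiv> {\<omega>\<in>space M. P (\<lambda>i\<in>{m..<j}. X i \<omega>)}"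
  shows "\<epsilon>\<^sup>2 * prob A \<le> expectation (\<lambda>\<omega>. indicator A \<omega> * (\<Sum>i\<in>{m..<N}. X i \<omega>)\<^sup>2)"
proof -
  have rv[measurable]: "\<And>i. X i \<in> borel_measurable M"
    using indep unfolding indep_vars_def2 by simp
  have A[measurable]: "A \<in> sets M"
    unfolding A_def by measurable
  have S2: "integrable M (\<lambda>\<omega>. (\<Sum>i\<in>{m..<j}. X i \<omega>)\<^sup>2)"
    by (rule integrable_square_sum[OF rv int2])
  have "\<epsilon>\<^sup>2 * prob A = expectation (\<lambda>\<omega>. indicator A \<omega> * \<epsilon>\<^sup>2)"
    by simp
  also have "\<dots> \<le> expectation (\<lambda>\<omega>. indicator A \<omega> * (\<Sum>i\<in>{m..<j}. X i \<omega>)\<^sup>2)"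
  proof (rule integral_mono)
    show "integrable M (\<lambda>\<omega>. indicator A \<omega> * (\<Sum>i\<in>{m..<j}. X i \<omega>)\<^sup>2)"
      using integrable_real_mult_indicator[OF A S2] by (simp add: mult.commute)
    have "\<epsilon> \<le> \<bar>\<Sum>i\<in>{m..<j}. X i \<omega>\<bar>" if "\<omega> \<in> A" for \<omega>
      using P_large[of "\<lambda>i\<in>{m..<j}. X i \<omega>"] that unfolding A_def by simp
    then show "indicator A \<omega> * \<epsilon>\<^sup>2 \<le> indicator A \<omega> * (\<Sum>i\<in>{m..<j}. X i \<omega>)\<^sup>2" for \<omega>
      using eps by (simp add: indicator_def abs_le_square_iff[symmetric])
  qed (simp add: emeasure_eq_measure)
  also have "\<dots> \<le> expectation (\<lambda>\<omega>. indicator A \<omega> * (\<Sum>i\<in>{m..<N}. X i \<omega>)\<^sup>2)"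
    unfolding A_def by (rule expectation_indicator_square_sum_mono[OF indep int2 mean P mjN])
  finally show ?thesis .
qed

lemma kolmogorov_maximal_inequality:
  fixes X :: "nat \<Rightarrow> 'a \<Rightarrow> real"
  assumes indep: "indep_vars (\<lambda>_. borel) X UNIV"
    and int2: "\<And>i. integrable M (\<lambda>\<omega>. (X i \<omega>)\<^sup>2)"
    and mean: "\<And>i. expectation (X i) = 0"
    and eps: "0 < \<epsilon>"
  shows "\<epsilon>\<^sup>2 * prob {\<omega>\<in>space M. \<exists>j\<in>{m<..N}. \<epsilon> \<le> \<bar>\<Sum>i\<in>{m..<j}. X i \<omega>\<bar>}
          \<le> (\<Sum>i\<in>{m..<N}. expectation (\<lambda>\<omega>. (X i \<omega>)\<^sup>2))"
proof -
  have rv[measurable]: "\<And>i. X i \<in> borel_measurable M"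
    using indep unfolding indep_vars_def2 by simp
  define S where "S j \<omega> = (\<Sum>i\<in>{m..<j}. X i \<omega>)" for j \<omega>
  have [measurable]: "S j \<in> borel_measurable M" for j
    unfolding S_def by measurable
  have S2: "integrable M (\<lambda>\<omega>. (S j \<omega>)\<^sup>2)" for j
    unfolding S_def by (rule integrable_square_sum[OF rv int2])
  define A where "A j = {\<omega>\<in>space M. \<epsilon> \<le> \<bar>S j \<omega>\<bar> \<and> (\<forall>l\<in>{m<..N}. l < j \<longrightarrow> \<not> \<epsilon> \<le> \<bar>S l \<omega>\<bar>)}" for j
  have event: "{\<omega>\<in>space M. \<exists>j\<in>{m<..N}. \<epsilon> \<le> \<bar>\<Sum>i\<in>{m..<j}. X i \<omega>\<bar>} = (\<Union>j\<in>{m<..N}. A j)"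
    and disj: "disjoint_family_on A {m<..N}"
    using first_passage_Union[where P="\<lambda>j \<omega>. \<epsilon> \<le> \<bar>S j \<omega>\<bar>" and J="{m<..N}" and S="space M"]
    unfolding A_def S_def by simp_all
  have [measurable]: "A j \<in> sets M" for j
    unfolding A_def by measurable
  have first_passage: "\<epsilon>\<^sup>2 * prob (A j) \<le> expectation (\<lambda>\<omega>. indicator (A j) \<omega> * (S N \<omega>)\<^sup>2)"
    if j: "j \<in> {m<..N}" for j
  proof -
    define P where "P x \<longleftrightarrow> \<epsilon> \<le> \<bar>\<Sum>i\<in>{m..<j}. x i\<bar>
        \<and> (\<forall>l\<in>{m<..N}. l < j \<longrightarrow> \<not> \<epsilon> \<le> \<bar>\<Sum>i\<in>{m..<l}. x i\<bar>)" for x :: "nat \<Rightarrow> real"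
    have P_meas: "Measurable.pred (PiM {m..<j} (\<lambda>_. borel)) P"
      unfolding P_def by measurable
    have "(\<Sum>i\<in>{m..<l}. (\<lambda>i\<in>{m..<j}. X i \<omega>) i) = S l \<omega>" if "l \<le> j" for l \<omega>
      unfolding S_def using that by (intro sum.cong) auto
    then have "A j = {\<omega>\<in>space M. P (\<lambda>i\<in>{m..<j}. X i \<omega>)}"
      unfolding A_def P_def by auto
    then show ?thesis
      unfolding S_def using j eps
      by (simp only:) (rule first_block_event_prob_le[OF indep int2 mean P_meas]; simp add: P_def)
  qed
  have "\<epsilon>\<^sup>2 * prob (\<Union>j\<in>{m<..N}. A j) = (\<Sum>j\<in>{m<..N}. \<epsilon>\<^sup>2 * prob (A j))"
    by (subst finite_measure_finite_Union) (auto simp: disj sum_distrib_left)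
  also have "\<dots> \<le> (\<Sum>j\<in>{m<..N}. expectation (\<lambda>\<omega>. indicator (A j) \<omega> * (S N \<omega>)\<^sup>2))"
    by (rule sum_mono) (rule first_passage)
  also have "\<dots> = expectation (\<lambda>\<omega>. indicator (\<Union>j\<in>{m<..N}. A j) \<omega> * (S N \<omega>)\<^sup>2)"
    using integrable_real_mult_indicator[OF _ S2]
    by (subst Bochner_Integration.integral_sum[symmetric])
       (auto simp: mult.commute sum_distrib_left indicator_UN_disjoint[OF _ disj])
  also have "\<dots> \<le> expectation (\<lambda>\<omega>. (S N \<omega>)\<^sup>2)"
  proof (rule integral_mono)
    have UA: "(\<Union>j\<in>{m<..N}. A j) \<in> sets M"
      by measurable
    show "integrable M (\<lambda>\<omega>. indicator (\<Union>j\<in>{m<..N}. A j) \<omega> * (S N \<omega>)\<^sup>2)"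
      by (subst mult.commute) (rule integrable_real_mult_indicator[OF UA S2])
  qed (auto simp: S2 indicator_def)
  also have "\<dots> = (\<Sum>i\<in>{m..<N}. expectation (\<lambda>\<omega>. (X i \<omega>)\<^sup>2))"
    unfolding S_def by (rule expectation_square_sum_indep[OF indep int2 mean])
  finally show ?thesis
    by (simp only: event)
qed

lemma kolmogorov_maximal_inequality_tail:
  fixes X :: "nat \<Rightarrow> 'a \<Rightarrow> real"
  assumes indep: "indep_vars (\<lambda>_. borel) X UNIV"
    and int2: "\<And>i. integrable M (\<lambda>\<omega>. (X i \<omega>)\<^sup>2)"
    and mean: "\<And>i. expectation (X i) = 0"
    and summ: "summable (\<lambda>i. expectation (\<lambda>\<omega>. (X i \<omega>)\<^sup>2))"
    and eps: "0 < \<epsilon>"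
  shows "prob {\<omega>\<in>space M. \<exists>j>m. \<epsilon> \<le> \<bar>\<Sum>i\<in>{m..<j}. X i \<omega>\<bar>}
          \<le> (\<Sum>i. expectation (\<lambda>\<omega>. (X (i + m) \<omega>)\<^sup>2)) / \<epsilon>\<^sup>2"
proof -
  have rv[measurable]: "\<And>i. X i \<in> borel_measurable M"
    using indep unfolding indep_vars_def2 by simp
  define v where "v i = expectation (\<lambda>\<omega>. (X i \<omega>)\<^sup>2)" for i
  have v_nonneg: "0 \<le> v i" for i
    unfolding v_def by (rule integral_nonneg_AE) simp
  have summ': "summable (\<lambda>i. v (i + m))"
    using summ unfolding v_def by (subst summable_iff_shift)
  define E where "E N = {\<omega>\<in>space M. \<exists>j\<in>{m<..N}. \<epsilon> \<le> \<bar>\<Sum>i\<in>{m..<j}. X i \<omega>\<bar>}" for N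
  have [measurable]: "E N \<in> sets M" for N
    unfolding E_def by measurable
  have "incseq E"
    unfolding incseq_def E_def by force
  then have lim: "(\<lambda>N. prob (E N)) \<longlonglongrightarrow> prob (\<Union>N. E N)"
    by (intro finite_Lim_measure_incseq) auto
  have bound: "prob (E N) \<le> (\<Sum>i. v (i + m)) / \<epsilon>\<^sup>2" for N
  proof -
    have "\<epsilon>\<^sup>2 * prob (E N) \<le> (\<Sum>i\<in>{m..<N}. v i)"
      unfolding E_def v_def by (rule kolmogorov_maximal_inequality[OF indep int2 mean eps])
    also have "\<dots> = (\<Sum>i\<in>{0..<N - m}. v (i + m))"
      by (subst sum.atLeastLessThan_shift_0) (simp add: comp_def add.commute)
    also have "\<dots> \<le> (\<Sum>i. v (i + m))"
      by (rule sum_le_suminf[OF summ']) (auto simp: v_nonneg)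
    finally show ?thesis
      using eps by (simp add: pos_le_divide_eq mult.commute)
  qed
  have "prob (\<Union>N. E N) \<le> (\<Sum>i. v (i + m)) / \<epsilon>\<^sup>2"
    using LIMSEQ_le_const2[OF lim] bound by blast
  moreover have "(\<Union>N. E N) = {\<omega>\<in>space M. \<exists>j>m. \<epsilon> \<le> \<bar>\<Sum>i\<in>{m..<j}. X i \<omega>\<bar>}"
    unfolding E_def by auto (metis greaterThanAtMost_iff order_refl)
  ultimately show ?thesis
    by (simp add: v_def)
qed

lemma AE_tail_sums_small:
  fixes X :: "nat \<Rightarrow> 'a \<Rightarrow> real"
  assumes indep: "indep_vars (\<lambda>_. borel) X UNIV"
    and int2: "\<And>i. integrable M (\<lambda>\<omega>. (X i \<omega>)\<^sup>2)"
    and mean: "\<And>i. expectation (X i) = 0"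
    and summ: "summable (\<lambda>i. expectation (\<lambda>\<omega>. (X i \<omega>)\<^sup>2))"
    and eps: "0 < \<epsilon>"
  shows "AE \<omega> in M. \<exists>m. \<forall>j>m. \<bar>\<Sum>i\<in>{m..<j}. X i \<omega>\<bar> < \<epsilon>"
proof -
  have rv[measurable]: "\<And>i. X i \<in> borel_measurable M"
    using indep unfolding indep_vars_def2 by simp
  define v where "v i = expectation (\<lambda>\<omega>. (X i \<omega>)\<^sup>2)" for i
  define B where "B = {\<omega>\<in>space M. \<forall>m. \<exists>j>m. \<epsilon> \<le> \<bar>\<Sum>i\<in>{m..<j}. X i \<omega>\<bar>}"
  have [measurable]: "B \<in> sets M"
    unfolding B_def by measurable
  have small_prob: "prob B \<le> d" if d: "0 < d" for d
  proof -
    obtain m where m: "norm (\<Sum>i. v (i + m)) < d * \<epsilon>\<^sup>2"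
      using suminf_exist_split[of "d * \<epsilon>\<^sup>2" v] summ d eps unfolding v_def by auto
    have "prob B \<le> prob {\<omega>\<in>space M. \<exists>j>m. \<epsilon> \<le> \<bar>\<Sum>i\<in>{m..<j}. X i \<omega>\<bar>}"
      by (rule finite_measure_mono) (auto simp: B_def)
    also have "\<dots> \<le> (\<Sum>i. v (i + m)) / \<epsilon>\<^sup>2"
      unfolding v_def by (rule kolmogorov_maximal_inequality_tail[OF indep int2 mean summ eps])
    also have "\<dots> \<le> d"
      using m eps by (simp add: divide_le_eq)
    finally show ?thesis .
  qed
  have "prob B \<le> 0"
    by (rule field_le_epsilon) (simp add: small_prob)
  then have "prob B = 0"
    using measure_nonneg[of M B] by linarith
  then have "B \<in> null_sets M"
    by (simp add: emeasure_eq_measure null_sets_def)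
  then show ?thesis
    by (rule AE_I') (auto simp: B_def not_less)
qed

lemma AE_summable_indep:
  fixes X :: "nat \<Rightarrow> 'a \<Rightarrow> real"
  assumes indep: "indep_vars (\<lambda>_. borel) X UNIV"
    and int2: "\<And>i. integrable M (\<lambda>\<omega>. (X i \<omega>)\<^sup>2)"
    and mean: "\<And>i. expectation (X i) = 0"
    and summ: "summable (\<lambda>i. expectation (\<lambda>\<omega>. (X i \<omega>)\<^sup>2))"
  shows "AE \<omega> in M. summable (\<lambda>i. X i \<omega>)"
proof -
  have "AE \<omega> in M. \<forall>r::nat. \<exists>m. \<forall>j>m. \<bar>\<Sum>i\<in>{m..<j}. X i \<omega>\<bar> < 1 / Suc r"
    using AE_tail_sums_small[OF indep int2 mean summ] by (subst AE_all_countable) simp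
  then show ?thesis
  proof (rule AE_mp, intro AE_I2 impI)
    fix \<omega>
    assume tails: "\<forall>r::nat. \<exists>m. \<forall>j>m. \<bar>\<Sum>i\<in>{m..<j}. X i \<omega>\<bar> < 1 / Suc r"
    show "summable (\<lambda>i. X i \<omega>)"
    proof (rule summable_if_tail_sums_small)
      fix e :: real assume "0 < e"
      then obtain r :: nat where r: "1 / Suc r < e"
        using nat_approx_posE by auto
      obtain m where m: "\<forall>j>m. \<bar>\<Sum>i\<in>{m..<j}. X i \<omega>\<bar> < 1 / Suc r"
        using tails by blast
      have "\<bar>\<Sum>i\<in>{m..<j}. X i \<omega>\<bar> < e" if "j > m" for j
        using m[rule_format, OF that] r by linarith
      then show "\<exists>m. \<forall>j>m. \<bar>\<Sum>i\<in>{m..<j}. X i \<omega>\<bar> < e"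
        by blast
    qed
  qed
qed

end

section \<open>Characteristic functions of weighted series\<close>

lemma abs_exp_neg_sub_linear_le:
  fixes y :: real
  assumes "0 \<le> y"
  shows "\<bar>exp (- y) - (1 - y)\<bar> \<le> y\<^sup>2 / 2"
proof -
  have pos: "0 < 1 + y + y\<^sup>2 / 2"
    using assms by (simp add: add_pos_nonneg)
  have "exp (- y) = 1 / exp y"
    by (simp add: exp_minus inverse_eq_divide)
  also have "\<dots> \<le> 1 / (1 + y + y\<^sup>2 / 2)"
    using exp_lower_Taylor_quadratic[OF assms] pos by (intro divide_left_mono) auto
  also have "\<dots> \<le> 1 - y + y\<^sup>2 / 2"
  proof -
    have "(1 - y + y\<^sup>2 / 2) * (1 + y + y\<^sup>2 / 2) = 1 + y ^ 4 / 4"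
      by (simp add: power2_eq_square power4_eq_xxxx algebra_simps)
    then show ?thesis
      using pos by (simp add: divide_le_eq)
  qed
  finally show ?thesis
    using exp_ge_add_one_self[of "- y"] by (simp add: abs_le_iff)
qed

context real_distribution
begin

lemma char_approx_normal:
  assumes i1: "integrable M (\<lambda>x. x)" and i2: "integrable M (\<lambda>x. x\<^sup>2)"
    and m0: "expectation (\<lambda>x. x) = 0" and s2: "expectation (\<lambda>x. x\<^sup>2) = \<sigma>2"
    and u: "\<bar>u\<bar> \<le> \<delta>"
  shows "cmod (char M u - exp (- (u\<^sup>2 * \<sigma>2 / 2)))
           \<le> u\<^sup>2 * ((LINT x|M. min (6 * x\<^sup>2) (\<delta> * \<bar>x\<bar> ^ 3)) / 6 + \<delta>\<^sup>2 * \<sigma>2\<^sup>2 / 8)"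
proof -
  have \<delta>: "0 \<le> \<delta>"
    using u by linarith
  have \<sigma>2: "0 \<le> \<sigma>2"
    using s2 integral_nonneg_AE[of "\<lambda>x. x\<^sup>2" M] by simp
  have int_min: "integrable M (\<lambda>x. min (6 * x\<^sup>2) (d * \<bar>x\<bar> ^ 3))" if "0 \<le> d" for d
    by (rule Bochner_Integration.integrable_bound[where f="\<lambda>x. 6 * x\<^sup>2"]) (use i2 that in auto)
  have cube_le: "\<bar>u\<bar> * \<bar>x\<bar> ^ 3 \<le> \<delta> * \<bar>x\<bar> ^ 3" for x
    using u by (intro mult_right_mono) auto
  have "(LINT x|M. min (6 * x\<^sup>2) (\<bar>u\<bar> * \<bar>x\<bar> ^ 3)) \<le> (LINT x|M. min (6 * x\<^sup>2) (\<delta> * \<bar>x\<bar> ^ 3))"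
    using \<delta> by (intro integral_mono int_min min.mono order_refl cube_le) simp_all
  then have "u\<^sup>2 / 6 * (LINT x|M. min (6 * x\<^sup>2) (\<bar>u\<bar> * \<bar>x\<bar> ^ 3))
      \<le> u\<^sup>2 * ((LINT x|M. min (6 * x\<^sup>2) (\<delta> * \<bar>x\<bar> ^ 3)) / 6)"
    by (subst times_divide_eq_right, subst times_divide_eq_left) (intro divide_right_mono mult_left_mono; simp)
  moreover have "cmod (char M u - (1 - u\<^sup>2 * \<sigma>2 / 2))
      \<le> u\<^sup>2 / 6 * (LINT x|M. min (6 * x\<^sup>2) (\<bar>u\<bar> * \<bar>x\<bar> ^ 3))"
    using m0 s2 by (intro char_approx3 i1 i2) simp_all
  ultimately have taylor: "cmod (char M u - (1 - u\<^sup>2 * \<sigma>2 / 2))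
      \<le> u\<^sup>2 * ((LINT x|M. min (6 * x\<^sup>2) (\<delta> * \<bar>x\<bar> ^ 3)) / 6)"
    by linarith
  have "\<bar>exp (- (u\<^sup>2 * \<sigma>2 / 2)) - (1 - u\<^sup>2 * \<sigma>2 / 2)\<bar> \<le> (u\<^sup>2 * \<sigma>2 / 2)\<^sup>2 / 2"
    using \<sigma>2 by (intro abs_exp_neg_sub_linear_le) simp
  also have "\<dots> = u\<^sup>2 * (u\<^sup>2 * \<sigma>2\<^sup>2 / 8)"
    by (simp add: power2_eq_square)
  also have "\<dots> \<le> u\<^sup>2 * (\<delta>\<^sup>2 * \<sigma>2\<^sup>2 / 8)"
    using u \<delta> by (intro mult_left_mono divide_right_mono mult_right_mono) (auto simp: abs_le_square_iff[symmetric])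
  finally have gauss: "cmod (complex_of_real (1 - u\<^sup>2 * \<sigma>2 / 2) - exp (- (u\<^sup>2 * \<sigma>2 / 2)))
      \<le> u\<^sup>2 * (\<delta>\<^sup>2 * \<sigma>2\<^sup>2 / 8)"
    by (simp only: norm_of_real of_real_diff[symmetric] abs_minus_commute)
  show ?thesis
    using norm_diff_triangle_le[OF taylor gauss] by (simp add: distrib_left)
qed

lemma continuous_truncated_cubic_moment:
  assumes i2: "integrable M (\<lambda>x. x\<^sup>2)"
  shows "continuous (at 0 within {0..}) (\<lambda>d. LINT x|M. min (6 * x\<^sup>2) (d * \<bar>x\<bar> ^ 3))"
  unfolding continuous_within_sequentially
proof (intro allI impI)
  fix D :: "nat \<Rightarrow> real" assume D: "(\<forall>n. D n \<in> {0..}) \<and> D \<longlonglongrightarrow> 0"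
  have "(\<lambda>n. LINT x|M. min (6 * x\<^sup>2) (D n * \<bar>x\<bar> ^ 3)) \<longlonglongrightarrow> (LINT x|M. min (6 * x\<^sup>2) (0 * \<bar>x\<bar> ^ 3))"
  proof (rule integral_dominated_convergence[where w="\<lambda>x. 6 * x\<^sup>2"])
    show "AE x in M. (\<lambda>n. min (6 * x\<^sup>2) (D n * \<bar>x\<bar> ^ 3)) \<longlonglongrightarrow> min (6 * x\<^sup>2) (0 * \<bar>x\<bar> ^ 3)"
      using D by (intro AE_I2 tendsto_intros) auto
  qed (use D i2 in auto)
  then show "((\<lambda>d. LINT x|M. min (6 * x\<^sup>2) (d * \<bar>x\<bar> ^ 3)) \<circ> D) \<longlonglongrightarrow> (LINT x|M. min (6 * x\<^sup>2) (0 * \<bar>x\<bar> ^ 3))"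
    by (simp add: comp_def)
qed

end

context prob_space
begin

lemma char_distr_scale:
  assumes [measurable]: "Y \<in> borel_measurable M"
  shows "char (distr M borel (\<lambda>\<omega>. c * Y \<omega>)) t = char (distr M borel Y) (t * c)"
  unfolding char_def by (simp add: integral_distr mult.assoc)

lemma char_weighted_sum_approx_normal:
  fixes X :: "nat \<Rightarrow> 'a \<Rightarrow> real" and w :: "nat \<Rightarrow> real" and \<mu> :: "real measure"
  assumes indep: "indep_vars (\<lambda>_. borel) X UNIV"
    and distrX: "\<And>k. distr M borel (X k) = \<mu>"
    and i1: "integrable \<mu> (\<lambda>x. x)" and i2: "integrable \<mu> (\<lambda>x. x\<^sup>2)"
    and m0: "(LINT x|\<mu>. x) = 0" and s2: "(LINT x|\<mu>. x\<^sup>2) = \<sigma>2"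
    and small: "\<And>k. \<bar>t * w k\<bar> \<le> \<delta>"
  shows "cmod (char (distr M borel (\<lambda>\<omega>. \<Sum>k<N. w k * X k \<omega>)) t
               - exp (- (t\<^sup>2 * \<sigma>2 * (\<Sum>k<N. (w k)\<^sup>2)) / 2))
      \<le> t\<^sup>2 * (\<Sum>k<N. (w k)\<^sup>2) * ((LINT x|\<mu>. min (6 * x\<^sup>2) (\<delta> * \<bar>x\<bar> ^ 3)) / 6 + \<delta>\<^sup>2 * \<sigma>2\<^sup>2 / 8)"
proof -
  have rv[measurable]: "\<And>i. X i \<in> borel_measurable M"
    using indep unfolding indep_vars_def2 by simp
  interpret \<mu>: real_distribution \<mu>
    using distrX[of 0] real_distribution_distr[of "X 0"] by simp
  define C where "C = (LINT x|\<mu>. min (6 * x\<^sup>2) (\<delta> * \<bar>x\<bar> ^ 3)) / 6 + \<delta>\<^sup>2 * \<sigma>2\<^sup>2 / 8"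
  have \<sigma>2: "0 \<le> \<sigma>2"
    using s2 integral_nonneg_AE[of "\<lambda>x. x\<^sup>2" \<mu>] by simp
  have "char (distr M borel (\<lambda>\<omega>. \<Sum>k<N. w k * X k \<omega>)) t = (\<Prod>k<N. char (distr M borel (\<lambda>\<omega>. w k * X k \<omega>)) t)"
    by (intro char_distr_sum indep_vars_subset[OF indep_vars_compose2[OF indep]]) auto
  also have "\<dots> = (\<Prod>k<N. char \<mu> (t * w k))"
    by (simp add: char_distr_scale distrX)
  finally have char_sum: "char (distr M borel (\<lambda>\<omega>. \<Sum>k<N. w k * X k \<omega>)) t = (\<Prod>k<N. char \<mu> (t * w k))" .
  have "- (t\<^sup>2 * \<sigma>2 * (\<Sum>k<N. (w k)\<^sup>2)) / 2 = (\<Sum>k<N. - ((t * w k)\<^sup>2 * \<sigma>2 / 2))"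
    by (simp add: sum_distrib_left sum_divide_distrib power_mult_distrib algebra_simps flip: sum_negf)
  then have exp_sum: "complex_of_real (exp (- (t\<^sup>2 * \<sigma>2 * (\<Sum>k<N. (w k)\<^sup>2)) / 2))
      = (\<Prod>k<N. complex_of_real (exp (- ((t * w k)\<^sup>2 * \<sigma>2 / 2))))"
    by (simp add: exp_sum)
  have "cmod ((\<Prod>k<N. char \<mu> (t * w k)) - (\<Prod>k<N. complex_of_real (exp (- ((t * w k)\<^sup>2 * \<sigma>2 / 2)))))
      \<le> (\<Sum>k<N. cmod (char \<mu> (t * w k) - exp (- ((t * w k)\<^sup>2 * \<sigma>2 / 2))))"
    using \<sigma>2 by (intro norm_prod_diff \<mu>.cmod_char_le_1) simp_all
  also have "\<dots> \<le> (\<Sum>k<N. (t * w k)\<^sup>2 * C)"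
    unfolding C_def using i1 i2 m0 s2 small by (intro sum_mono \<mu>.char_approx_normal) auto
  also have "\<dots> = t\<^sup>2 * (\<Sum>k<N. (w k)\<^sup>2) * C"
    by (simp add: sum_distrib_left sum_distrib_right power_mult_distrib algebra_simps)
  finally show ?thesis
    unfolding char_sum exp_sum C_def .
qed

lemma char_weighted_series_approx_normal:
  fixes X :: "nat \<Rightarrow> 'a \<Rightarrow> real" and w :: "nat \<Rightarrow> real" and \<mu> :: "real measure"
  assumes indep: "indep_vars (\<lambda>_. borel) X UNIV"
    and distrX: "\<And>k. distr M borel (X k) = \<mu>"
    and i1: "integrable \<mu> (\<lambda>x. x)" and i2: "integrable \<mu> (\<lambda>x. x\<^sup>2)"
    and m0: "(LINT x|\<mu>. x) = 0" and s2: "(LINT x|\<mu>. x\<^sup>2) = \<sigma>2"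
    and wsum: "summable (\<lambda>k. (w k)\<^sup>2)"
    and small: "\<And>k. \<bar>t * w k\<bar> \<le> \<delta>"
  shows "cmod (char (distr M borel (\<lambda>\<omega>. \<Sum>k. w k * X k \<omega>)) t
               - exp (- (t\<^sup>2 * \<sigma>2 * (\<Sum>k. (w k)\<^sup>2)) / 2))
      \<le> t\<^sup>2 * (\<Sum>k. (w k)\<^sup>2) * ((LINT x|\<mu>. min (6 * x\<^sup>2) (\<delta> * \<bar>x\<bar> ^ 3)) / 6 + \<delta>\<^sup>2 * \<sigma>2\<^sup>2 / 8)"
proof -
  have rv[measurable]: "\<And>i. X i \<in> borel_measurable M"
    using indep unfolding indep_vars_def2 by simp
  define C where "C = (LINT x|\<mu>. min (6 * x\<^sup>2) (\<delta> * \<bar>x\<bar> ^ 3)) / 6 + \<delta>\<^sup>2 * \<sigma>2\<^sup>2 / 8"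
  have "\<bar>t * w 0\<bar> \<le> \<delta>"
    by (rule small)
  then have "0 \<le> C"
    unfolding C_def by (intro add_nonneg_nonneg divide_nonneg_pos integral_nonneg_AE) auto
  have moments: "integrable M (\<lambda>\<omega>. (X k \<omega>)\<^sup>2)" "expectation (X k) = 0" "expectation (\<lambda>\<omega>. (X k \<omega>)\<^sup>2) = \<sigma>2" for k
    using i2 m0 s2 unfolding distrX[of k, symmetric] by (simp_all add: integrable_distr_eq integral_distr)
  have "AE \<omega> in M. summable (\<lambda>k. w k * X k \<omega>)"
  proof (rule AE_summable_indep)
    show "indep_vars (\<lambda>_. borel) (\<lambda>k \<omega>. w k * X k \<omega>) UNIV"
      by (rule indep_vars_compose2[OF indep]) simp
    show "summable (\<lambda>k. expectation (\<lambda>\<omega>. (w k * X k \<omega>)\<^sup>2))"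
      using wsum moments by (simp add: power_mult_distrib summable_mult2)
  qed (use moments in \<open>simp_all add: power_mult_distrib\<close>)
  then have "AE \<omega> in M. (\<lambda>N. iexp (t * (\<Sum>k<N. w k * X k \<omega>))) \<longlonglongrightarrow> iexp (t * (\<Sum>k. w k * X k \<omega>))"
    by eventually_elim (intro tendsto_intros summable_LIMSEQ)
  then have "(\<lambda>N. CLINT \<omega>|M. iexp (t * (\<Sum>k<N. w k * X k \<omega>))) \<longlonglongrightarrow> (CLINT \<omega>|M. iexp (t * (\<Sum>k. w k * X k \<omega>)))"
    by (intro integral_dominated_convergence[where w="\<lambda>_. 1"]) (auto simp: norm_exp_i_times)
  then have lim: "(\<lambda>N. cmod (char (distr M borel (\<lambda>\<omega>. \<Sum>k<N. w k * X k \<omega>)) t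
                   - exp (- (t\<^sup>2 * \<sigma>2 * (\<Sum>k<N. (w k)\<^sup>2)) / 2)))
      \<longlonglongrightarrow> cmod (char (distr M borel (\<lambda>\<omega>. \<Sum>k. w k * X k \<omega>)) t - exp (- (t\<^sup>2 * \<sigma>2 * (\<Sum>k. (w k)\<^sup>2)) / 2))"
    unfolding char_def using wsum by (intro tendsto_intros summable_LIMSEQ) (simp_all add: integral_distr)
  have partial_le: "t\<^sup>2 * (\<Sum>k<N. (w k)\<^sup>2) * C \<le> t\<^sup>2 * (\<Sum>k. (w k)\<^sup>2) * C" for N
    using \<open>0 \<le> C\<close> by (intro mult_right_mono mult_left_mono sum_le_suminf wsum) auto
  have "cmod (char (distr M borel (\<lambda>\<omega>. \<Sum>k<N. w k * X k \<omega>)) t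
                   - exp (- (t\<^sup>2 * \<sigma>2 * (\<Sum>k<N. (w k)\<^sup>2)) / 2)) \<le> t\<^sup>2 * (\<Sum>k. (w k)\<^sup>2) * C" for N
    using order.trans[OF char_weighted_sum_approx_normal[where w=w and N=N, OF indep distrX i1 i2 m0 s2 small]
        partial_le[of N, unfolded C_def]] unfolding C_def .
  then show ?thesis
    unfolding C_def using LIMSEQ_le_const2[OF lim] by blast
qed

lemma char_scaled_weighted_series_approx_normal:
  fixes X :: "nat \<Rightarrow> 'a \<Rightarrow> real" and w :: "nat \<Rightarrow> real" and \<mu> :: "real measure"
  assumes indep: "indep_vars (\<lambda>_. borel) X UNIV"
    and distrX: "\<And>k. distr M borel (X k) = \<mu>"
    and i1: "integrable \<mu> (\<lambda>x. x)" and i2: "integrable \<mu> (\<lambda>x. x\<^sup>2)"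
    and m0: "(LINT x|\<mu>. x) = 0" and s2: "(LINT x|\<mu>. x\<^sup>2) = \<sigma>2" and \<sigma>2: "0 < \<sigma>2"
    and wsum: "summable (\<lambda>k. (w k)\<^sup>2)" and small: "\<And>k. \<bar>L * w k\<bar> \<le> \<delta>"
  defines "\<rho> \<equiv> L\<^sup>2 * \<sigma>2 * (\<Sum>k. (w k)\<^sup>2)"
  shows "cmod (char (distr M borel (\<lambda>\<omega>. L * (\<Sum>k. w k * X k \<omega>))) t - exp (- t\<^sup>2 / 2))
    \<le> \<bar>exp (- (t\<^sup>2 * \<rho>) / 2) - exp (- t\<^sup>2 / 2)\<bar>
      + t\<^sup>2 * \<rho> / \<sigma>2 * ((LINT x|\<mu>. min (6 * x\<^sup>2) (\<bar>t\<bar> * \<delta> * \<bar>x\<bar> ^ 3)) / 6 + (\<bar>t\<bar> * \<delta>)\<^sup>2 * \<sigma>2\<^sup>2 / 8)"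
proof -
  have rv[measurable]: "\<And>i. X i \<in> borel_measurable M"
    using indep unfolding indep_vars_def2 by simp
  have small': "\<bar>t * L * w k\<bar> \<le> \<bar>t\<bar> * \<delta>" for k
    using small by (simp add: abs_mult mult.assoc mult_left_mono)
  have "(t * L)\<^sup>2 * \<sigma>2 * (\<Sum>k. (w k)\<^sup>2) = t\<^sup>2 * \<rho>"
    and "(t * L)\<^sup>2 * (\<Sum>k. (w k)\<^sup>2) = t\<^sup>2 * \<rho> / \<sigma>2"
    using \<sigma>2 by (simp_all add: \<rho>_def power_mult_distrib)
  then have "cmod (char (distr M borel (\<lambda>\<omega>. \<Sum>k. w k * X k \<omega>)) (t * L) - exp (- (t\<^sup>2 * \<rho>) / 2))
      \<le> t\<^sup>2 * \<rho> / \<sigma>2 * ((LINT x|\<mu>. min (6 * x\<^sup>2) (\<bar>t\<bar> * \<delta> * \<bar>x\<bar> ^ 3)) / 6 + (\<bar>t\<bar> * \<delta>)\<^sup>2 * \<sigma>2\<^sup>2 / 8)"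
    using char_weighted_series_approx_normal[where t="t * L" and \<delta>="\<bar>t\<bar> * \<delta>",
        OF indep distrX i1 i2 m0 s2 wsum small']
    by simp
  moreover have "cmod (complex_of_real (exp (- (t\<^sup>2 * \<rho>) / 2)) - exp (- t\<^sup>2 / 2))
      \<le> \<bar>exp (- (t\<^sup>2 * \<rho>) / 2) - exp (- t\<^sup>2 / 2)\<bar>"
    by (simp only: of_real_diff[symmetric] norm_of_real order_refl)
  ultimately have "cmod (char (distr M borel (\<lambda>\<omega>. \<Sum>k. w k * X k \<omega>)) (t * L) - exp (- t\<^sup>2 / 2))
      \<le> t\<^sup>2 * \<rho> / \<sigma>2 * ((LINT x|\<mu>. min (6 * x\<^sup>2) (\<bar>t\<bar> * \<delta> * \<bar>x\<bar> ^ 3)) / 6 + (\<bar>t\<bar> * \<delta>)\<^sup>2 * \<sigma>2\<^sup>2 / 8)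
        + \<bar>exp (- (t\<^sup>2 * \<rho>) / 2) - exp (- t\<^sup>2 / 2)\<bar>"
    by (rule norm_diff_triangle_le)
  then show ?thesis
    by (simp add: char_distr_scale add.commute)
qed

lemma char_scaled_weighted_series_tendsto_normal:
  fixes X :: "nat \<Rightarrow> 'a \<Rightarrow> real" and w :: "'b \<Rightarrow> nat \<Rightarrow> real" and L \<delta> :: "'b \<Rightarrow> real"
    and \<mu> :: "real measure"
  assumes indep: "indep_vars (\<lambda>_. borel) X UNIV"
    and distrX: "\<And>k. distr M borel (X k) = \<mu>"
    and i1: "integrable \<mu> (\<lambda>x. x)" and i2: "integrable \<mu> (\<lambda>x. x\<^sup>2)"
    and m0: "(LINT x|\<mu>. x) = 0" and s2: "(LINT x|\<mu>. x\<^sup>2) = \<sigma>2" and \<sigma>2: "0 < \<sigma>2"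
    and wsum: "\<forall>\<^sub>F s in F. summable (\<lambda>k. (w s k)\<^sup>2)"
    and small: "\<forall>\<^sub>F s in F. \<forall>k. \<bar>L s * w s k\<bar> \<le> \<delta> s" and \<delta>: "(\<delta> \<longlongrightarrow> 0) F"
    and var: "((\<lambda>s. (L s)\<^sup>2 * \<sigma>2 * (\<Sum>k. (w s k)\<^sup>2)) \<longlongrightarrow> 1) F"
  shows "((\<lambda>s. char (distr M borel (\<lambda>\<omega>. L s * (\<Sum>k. w s k * X k \<omega>))) t)
           \<longlongrightarrow> char std_normal_distribution t) F"
proof -
  interpret \<mu>: real_distribution \<mu>
    using distrX[of 0] real_distribution_distr[of "X 0"] indep unfolding indep_vars_def2 by simp
  define \<rho> where "\<rho> s = (L s)\<^sup>2 * \<sigma>2 * (\<Sum>k. (w s k)\<^sup>2)" for s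
  define E where "E d = (LINT x|\<mu>. min (6 * x\<^sup>2) (d * \<bar>x\<bar> ^ 3))" for d
  define B where "B s = \<bar>exp (- (t\<^sup>2 * \<rho> s) / 2) - exp (- t\<^sup>2 / 2)\<bar>
      + t\<^sup>2 * \<rho> s / \<sigma>2 * (E (\<bar>t\<bar> * \<delta> s) / 6 + (\<bar>t\<bar> * \<delta> s)\<^sup>2 * \<sigma>2\<^sup>2 / 8)" for s
  have "\<forall>\<^sub>F s in F. cmod (char (distr M borel (\<lambda>\<omega>. L s * (\<Sum>k. w s k * X k \<omega>))) t
      - exp (- t\<^sup>2 / 2)) \<le> B s"
    using wsum small
  proof eventually_elim
    case (elim s)
    then show ?case
      unfolding B_def E_def \<rho>_def
      by (intro char_scaled_weighted_series_approx_normal[OF indep distrX i1 i2 m0 s2 \<sigma>2]) simp_all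
  qed
  moreover have "(B \<longlongrightarrow> 0) F"
  proof -
    have nonneg: "\<forall>\<^sub>F s in F. \<bar>t\<bar> * \<delta> s \<in> {0..}"
      using small
    proof eventually_elim
      case (elim s)
      then have "\<bar>L s * w s 0\<bar> \<le> \<delta> s" ..
      then show ?case
        using abs_ge_zero[of "L s * w s 0"] by simp
    qed
    have "((\<lambda>s. E (\<bar>t\<bar> * \<delta> s)) \<longlongrightarrow> E (\<bar>t\<bar> * 0)) F"
      unfolding E_def using \<mu>.continuous_truncated_cubic_moment[OF i2]
      by (intro continuous_within_tendsto_compose[OF _ nonneg tendsto_mult[OF tendsto_const \<delta>]]) simp
    moreover have "(\<rho> \<longlongrightarrow> 1) F"
      unfolding \<rho>_def[abs_def] by (rule var)
    ultimately have "(B \<longlongrightarrow> \<bar>exp (- (t\<^sup>2 * 1) / 2) - exp (- t\<^sup>2 / 2)\<bar>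
        + t\<^sup>2 * 1 / \<sigma>2 * (E (\<bar>t\<bar> * 0) / 6 + (\<bar>t\<bar> * 0)\<^sup>2 * \<sigma>2\<^sup>2 / 8)) F"
      unfolding B_def using \<sigma>2 by (intro tendsto_intros \<delta>) auto
    then show ?thesis
      by (simp add: E_def)
  qed
  ultimately have "((\<lambda>s. char (distr M borel (\<lambda>\<omega>. L s * (\<Sum>k. w s k * X k \<omega>))) t - exp (- t\<^sup>2 / 2)) \<longlongrightarrow> 0) F"
    by (rule Lim_null_comparison)
  then show ?thesis
    unfolding char_std_normal_distribution by (rule LIM_zero_cancel)
qed

end

section \<open>The series \<open>\<Sum> (ln k) powr \<beta> / k powr (1 + p)\<close> as \<open>p \<rightarrow> 0+\<close>\<close>

definition log_term :: "real \<Rightarrow> real \<Rightarrow> real \<Rightarrow> real" where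
  "log_term \<beta> p x = ln x powr \<beta> / x powr (1 + p)"

lemma log_term_nonneg: "0 \<le> log_term \<beta> p x"
  unfolding log_term_def by simp

lemma log_term_exp: "log_term \<beta> p (exp u) = u powr \<beta> * exp (- ((1 + p) * u))"
proof -
  have "exp u powr (1 + p) = exp ((1 + p) * u)"
    by (simp add: powr_def)
  then show ?thesis
    by (simp add: log_term_def exp_minus divide_inverse)
qed

lemma log_term_div:
  assumes "0 < x"
  shows "log_term \<beta> p x / x = log_term \<beta> (p + 1) x"
  using assms by (simp add: log_term_def powr_add add.assoc power2_eq_square)

lemma log_term_exp_antimono:
  assumes u: "0 < u" "\<beta> \<le> u" and uv: "u \<le> v" and p: "0 \<le> p"
  shows "log_term \<beta> p (exp v) \<le> log_term \<beta> p (exp u)"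
proof -
  have v: "0 < v"
    using u uv by simp
  have "(v / u) powr \<beta> \<le> exp ((1 + p) * (v - u))"
  proof (cases "\<beta> \<le> 0")
    case True
    then have "(v / u) powr \<beta> \<le> 1 powr \<beta>"
      using u uv by (intro powr_mono2') (auto simp: field_simps)
    then have "(v / u) powr \<beta> \<le> 1"
      by simp
    also have "1 \<le> exp ((1 + p) * (v - u))"
      using uv p by simp
    finally show ?thesis .
  next
    case False
    have "(v / u) powr \<beta> = exp (\<beta> * ln (v / u))"
      using u v by (simp add: powr_def)
    also have "\<dots> \<le> exp (\<beta> * (v / u - 1))"
      using False u v by (intro exp_mono mult_left_mono ln_le_minus_one) auto
    also have "\<beta> * (v / u - 1) = (\<beta> / u) * (v - u)"
      using u by (simp add: field_simps)
    also have "\<dots> \<le> (1 + p) * (v - u)"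
    proof (rule mult_right_mono)
      have "\<beta> \<le> (1 + p) * u"
        using u mult_nonneg_nonneg[OF p less_imp_le[OF u(1)]] by (simp add: distrib_right)
      then show "\<beta> / u \<le> 1 + p"
        using u by (simp add: divide_le_eq)
    qed (use uv in simp)
    finally show ?thesis
      by simp
  qed
  then have "v powr \<beta> \<le> u powr \<beta> * exp ((1 + p) * (v - u))"
    using u v by (simp add: powr_divide divide_le_eq mult.commute)
  then have "v powr \<beta> * exp (- ((1 + p) * v)) \<le> u powr \<beta> * exp ((1 + p) * (v - u)) * exp (- ((1 + p) * v))"
    by (rule mult_right_mono) simp
  also have "\<dots> = u powr \<beta> * exp (- ((1 + p) * u))"
    by (simp add: mult.assoc exp_add[symmetric] algebra_simps)
  finally show ?thesis
    unfolding log_term_exp .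
qed

lemma log_term_antimono_exponent:
  assumes "1 \<le> x" "p \<le> q"
  shows "log_term \<beta> q x \<le> log_term \<beta> p x"
  unfolding log_term_def using assms by (intro divide_left_mono powr_mono) (auto intro: mult_pos_pos)

lemma ln_powr_le_const_times_powr:
  fixes \<beta> \<delta> :: real
  assumes "0 < \<delta>"
  shows "\<exists>K>0. \<forall>x\<ge>2. ln x powr \<beta> \<le> K * x powr \<delta>"
proof (cases "\<beta> \<le> 0")
  case True
  have "ln x powr \<beta> \<le> ln 2 powr \<beta> * x powr \<delta>" if "2 \<le> x" for x
  proof -
    have "ln x powr \<beta> \<le> ln 2 powr \<beta>"
      using True that by (intro powr_mono2') auto
    also have "\<dots> \<le> ln 2 powr \<beta> * x powr \<delta>"
      using that assms ge_one_powr_ge_zero[of x \<delta>] by (simp add: mult_le_cancel_left1)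
    finally show ?thesis .
  qed
  then show ?thesis
    by (intro exI[of _ "ln 2 powr \<beta>"]) auto
next
  case False
  define \<gamma> where "\<gamma> = \<delta> / \<beta>"
  have \<gamma>: "0 < \<gamma>"
    using False assms by (simp add: \<gamma>_def)
  have "ln x powr \<beta> \<le> (1 / \<gamma>) powr \<beta> * x powr \<delta>" if x: "2 \<le> x" for x
  proof -
    have "ln (x powr \<gamma>) \<le> x powr \<gamma>"
      using x by (intro order.trans[OF ln_le_minus_one]) auto
    then have "ln x \<le> x powr \<gamma> / \<gamma>"
      using x \<gamma> by (simp add: ln_powr field_simps)
    then have "ln x powr \<beta> \<le> (x powr \<gamma> / \<gamma>) powr \<beta>"
      using x False by (intro powr_mono2) auto
    also have "\<dots> = (x powr \<gamma>) powr \<beta> / \<gamma> powr \<beta>"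
      using x \<gamma> by (simp add: powr_divide)
    also have "\<dots> = (1 / \<gamma>) powr \<beta> * x powr \<delta>"
      using \<gamma> False by (simp add: powr_powr powr_divide \<gamma>_def)
    finally show ?thesis .
  qed
  then show ?thesis
    using \<gamma> by (intro exI[of _ "(1 / \<gamma>) powr \<beta>"]) auto
qed

lemma log_term_bounded: "\<exists>K. \<forall>x\<ge>2. \<forall>p\<ge>0. log_term \<beta> p x \<le> K"
proof -
  obtain K where K: "\<And>x. 2 \<le> x \<Longrightarrow> ln x powr \<beta> \<le> K * x powr 1"
    using ln_powr_le_const_times_powr[of 1 \<beta>] by auto
  have "log_term \<beta> p x \<le> K" if "2 \<le> x" "0 \<le> p" for x p
  proof -
    have "log_term \<beta> p x \<le> log_term \<beta> 0 x"
      using that by (intro log_term_antimono_exponent) auto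
    also have "\<dots> \<le> K"
      using K[OF that(1)] that by (simp add: log_term_def divide_le_eq)
    finally show ?thesis .
  qed
  then show ?thesis
    by blast
qed

lemma summable_log_term:
  assumes "0 < p"
  shows "summable (\<lambda>n. log_term \<beta> p (real n))"
proof -
  obtain K where K: "\<And>x. 2 \<le> x \<Longrightarrow> ln x powr \<beta> \<le> K * x powr (p / 2)"
    using ln_powr_le_const_times_powr[of "p / 2" \<beta>] assms by auto
  have bound: "log_term \<beta> p (real n) \<le> K * real n powr (- 1 - p / 2)" if "2 \<le> n" for n
  proof -
    have "ln (real n) powr \<beta> \<le> K * real n powr (p / 2)"
      using K[of "real n"] that by simp
    then have "log_term \<beta> p (real n) \<le> K * real n powr (p / 2) / real n powr (1 + p)"
      unfolding log_term_def by (rule divide_right_mono) simp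
    also have "\<dots> = K * real n powr (p / 2 - (1 + p))"
      by (simp only: powr_diff times_divide_eq_right)
    also have "p / 2 - (1 + p) = - 1 - p / 2"
      by simp
    finally show ?thesis .
  qed
  show ?thesis
  proof (rule summable_comparison_test')
    show "summable (\<lambda>n. K * real n powr (- 1 - p / 2))"
      using assms by (intro summable_mult) (simp add: summable_real_powr_iff)
    show "norm (log_term \<beta> p (real n)) \<le> K * real n powr (- 1 - p / 2)" if "2 \<le> n" for n
      using bound[OF that] log_term_nonneg[of \<beta> p "real n"] by simp
  qed
qed

lemma ln_add_one_diff_bounds:
  fixes n :: real
  assumes "0 < n"
  shows "ln (n + 1) - ln n \<le> 1 / n" and "1 / (n + 1) \<le> ln (n + 1) - ln n"
proof -
  have "ln (n + 1) - ln n = ln ((n + 1) / n)"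
    using assms by (simp add: ln_div)
  also have "\<dots> = ln (1 + 1 / n)"
    using assms by (simp add: field_simps)
  also have "\<dots> \<le> 1 / n"
    using assms by (intro ln_add_one_self_le_self) simp
  finally show "ln (n + 1) - ln n \<le> 1 / n" .
  have "ln (n / (n + 1)) \<le> n / (n + 1) - 1"
    using assms by (intro ln_le_minus_one) simp
  then show "1 / (n + 1) \<le> ln (n + 1) - ln n"
    using assms by (simp add: ln_div field_simps)
qed

lemma nn_integral_Ico_le_const:
  fixes f :: "real \<Rightarrow> real"
  assumes "\<And>u. u \<in> {a..<b} \<Longrightarrow> f u \<le> c" and "a \<le> b"
  shows "(\<integral>\<^sup>+u. ennreal (f u) * indicator {a..<b} u \<partial>lborel) \<le> ennreal (c * (b - a))"
proof -
  have "(\<integral>\<^sup>+u. ennreal (f u) * indicator {a..<b} u \<partial>lborel) \<le> (\<integral>\<^sup>+u. ennreal c * indicator {a..<b} u \<partial>lborel)"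
    using assms(1) by (intro nn_integral_mono) (auto intro: ennreal_leI split: split_indicator)
  also have "\<dots> = ennreal (c * (b - a))"
    using assms(2) by (simp add: nn_integral_cmult_indicator ennreal_mult'')
  finally show ?thesis .
qed

lemma const_le_nn_integral_Ico:
  fixes f :: "real \<Rightarrow> real"
  assumes "\<And>u. u \<in> {a..<b} \<Longrightarrow> c \<le> f u" and "a \<le> b"
  shows "ennreal (c * (b - a)) \<le> (\<integral>\<^sup>+u. ennreal (f u) * indicator {a..<b} u \<partial>lborel)"
proof -
  have "ennreal (c * (b - a)) = (\<integral>\<^sup>+u. ennreal c * indicator {a..<b} u \<partial>lborel)"
    using assms(2) by (simp add: nn_integral_cmult_indicator ennreal_mult'')
  also have "\<dots> \<le> (\<integral>\<^sup>+u. ennreal (f u) * indicator {a..<b} u \<partial>lborel)"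
    using assms(1) by (intro nn_integral_mono) (auto intro: ennreal_leI split: split_indicator)
  finally show ?thesis .
qed

text \<open>On \<open>[ln n, ln (n + 1))\<close> the integrand equals \<open>log_term \<beta> p (exp u) * exp u\<close>, whose first factor
  is decreasing and whose second lies in \<open>[n, n + 1]\<close>.\<close>
lemma nn_integral_ln_interval_bounds:
  fixes n :: real
  assumes n: "2 \<le> n" and \<beta>: "\<beta> \<le> ln n" and p: "0 \<le> p"
  defines "I \<equiv> \<integral>\<^sup>+u. ennreal (u powr \<beta> * exp (- p * u)) * indicator {ln n..<ln (n + 1)} u \<partial>lborel"
  shows "ennreal (log_term \<beta> p (n + 1) * n / (n + 1)) \<le> I"
    and "I \<le> ennreal (log_term \<beta> p n * (n + 1) / n)"
proof -
  have ln_pos: "0 < ln n"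
    using n by simp
  have integrand: "u powr \<beta> * exp (- p * u) = log_term \<beta> p (exp u) * exp u" for u
    by (simp add: log_term_exp mult.assoc exp_add[symmetric] algebra_simps)
  have lower: "log_term \<beta> p (n + 1) * n \<le> u powr \<beta> * exp (- p * u)"
    and upper: "u powr \<beta> * exp (- p * u) \<le> log_term \<beta> p n * (n + 1)"
    if u: "u \<in> {ln n..<ln (n + 1)}" for u
  proof -
    have "exp (ln n) \<le> exp u" "exp u \<le> exp (ln (n + 1))"
      using u by simp_all
    then have "n \<le> exp u" "exp u \<le> n + 1"
      using n by simp_all
    moreover have "log_term \<beta> p (exp (ln (n + 1))) \<le> log_term \<beta> p (exp u)"
      and "log_term \<beta> p (exp u) \<le> log_term \<beta> p (exp (ln n))"
      using u ln_pos \<beta> p by (intro log_term_exp_antimono; simp)+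
    ultimately show "log_term \<beta> p (n + 1) * n \<le> u powr \<beta> * exp (- p * u)"
      and "u powr \<beta> * exp (- p * u) \<le> log_term \<beta> p n * (n + 1)"
      using n unfolding integrand by (auto intro!: mult_mono simp: log_term_nonneg)
  qed
  have "ennreal (log_term \<beta> p (n + 1) * n / (n + 1))
      \<le> ennreal (log_term \<beta> p (n + 1) * n * (ln (n + 1) - ln n))"
    using mult_left_mono[OF ln_add_one_diff_bounds(2), of n "log_term \<beta> p (n + 1) * n"] n
    by (intro ennreal_leI) (simp add: log_term_nonneg)
  also have "\<dots> \<le> I"
    unfolding I_def using n by (intro const_le_nn_integral_Ico lower) auto
  finally show "ennreal (log_term \<beta> p (n + 1) * n / (n + 1)) \<le> I" .
  have "I \<le> ennreal (log_term \<beta> p n * (n + 1) * (ln (n + 1) - ln n))"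
    unfolding I_def using n by (intro nn_integral_Ico_le_const upper) auto
  also have "\<dots> \<le> ennreal (log_term \<beta> p n * (n + 1) / n)"
    using mult_left_mono[OF ln_add_one_diff_bounds(1), of n "log_term \<beta> p n * (n + 1)"] n
    by (intro ennreal_leI) (simp add: log_term_nonneg)
  finally show "I \<le> ennreal (log_term \<beta> p n * (n + 1) / n)" .
qed

lemma nn_integral_split_ln_intervals:
  fixes g :: "real \<Rightarrow> ennreal" and N0 :: nat
  assumes N0: "1 \<le> N0" and [measurable]: "g \<in> borel_measurable borel"
  shows "(\<integral>\<^sup>+u. g u * indicator {ln (real N0)..} u \<partial>lborel)
       = (\<Sum>k. \<integral>\<^sup>+u. g u * indicator {ln (real (k + N0))..<ln (real (k + N0) + 1)} u \<partial>lborel)"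
proof -
  define A where "A k = {ln (real (k + N0))..<ln (real (k + N0) + 1)}" for k
  have "disjoint_family A"
    unfolding disjoint_family_on_def A_def
  proof (intro ballI impI)
    fix k l :: nat assume "k \<noteq> l"
    then have "ln (real (k + N0) + 1) \<le> ln (real (l + N0)) \<or> ln (real (l + N0) + 1) \<le> ln (real (k + N0))"
      using N0 by (cases "k < l") auto
    then show "{ln (real (k + N0))..<ln (real (k + N0) + 1)} \<inter> {ln (real (l + N0))..<ln (real (l + N0) + 1)} = {}"
      by auto
  qed
  moreover have "(\<Union>k. A k) = {ln (real N0)..}"
  proof (intro equalityI subsetI)
    fix u assume "u \<in> (\<Union>k. A k)"
    then show "u \<in> {ln (real N0)..}"
      using N0 by (auto simp: A_def intro: order_trans[rotated])
  next
    fix u assume u: "u \<in> {ln (real N0)..}"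
    define m where "m = nat \<lfloor>exp u\<rfloor>"
    have "exp (ln (real N0)) \<le> exp u"
      using u by simp
    then have "real N0 \<le> exp u"
      using N0 by simp
    then have m: "N0 \<le> m" "real m \<le> exp u" "exp u < real m + 1"
      unfolding m_def by (auto simp: le_nat_floor le_floor_iff)
    then have "ln (real m) \<le> ln (exp u)" "ln (exp u) < ln (real m + 1)"
      using N0 by (subst ln_le_cancel_iff ln_less_cancel_iff; simp)+
    then have "ln (real m) \<le> u" "u < ln (real m + 1)"
      by simp_all
    then have "u \<in> A (m - N0)"
      using m(1) by (simp add: A_def)
    then show "u \<in> (\<Union>k. A k)"
      by blast
  qed
  ultimately have "g u * indicator {ln (real N0)..} u = (\<Sum>k. g u * indicator (A k) u)" for u
    by (simp add: suminf_indicator)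
  then have "(\<integral>\<^sup>+u. g u * indicator {ln (real N0)..} u \<partial>lborel) = (\<integral>\<^sup>+u. (\<Sum>k. g u * indicator (A k) u) \<partial>lborel)"
    by simp
  also have "\<dots> = (\<Sum>k. \<integral>\<^sup>+u. g u * indicator (A k) u \<partial>lborel)"
    by (rule nn_integral_suminf) (simp add: A_def)
  finally show ?thesis
    by (simp add: A_def)
qed

lemma log_term_tail_integral_bounds:
  fixes N0 :: nat
  assumes N0: "2 \<le> N0" and \<beta>: "\<beta> \<le> ln (real N0)" and p: "0 \<le> p"
  defines "I \<equiv> \<integral>\<^sup>+u. ennreal (u powr \<beta> * exp (- p * u)) * indicator {ln (real N0)..} u \<partial>lborel"
  shows "(\<Sum>k. ennreal (log_term \<beta> p (real (k + N0) + 1) * real (k + N0) / (real (k + N0) + 1))) \<le> I"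
    and "I \<le> (\<Sum>k. ennreal (log_term \<beta> p (real (k + N0)) * (real (k + N0) + 1) / real (k + N0)))"
proof -
  have I: "I = (\<Sum>k. \<integral>\<^sup>+u. ennreal (u powr \<beta> * exp (- p * u))
      * indicator {ln (real (k + N0))..<ln (real (k + N0) + 1)} u \<partial>lborel)"
    unfolding I_def using N0 by (intro nn_integral_split_ln_intervals) auto
  have \<beta>': "\<beta> \<le> ln (real (k + N0))" for k
  proof -
    have "ln (real N0) \<le> ln (real (k + N0))"
      using N0 by simp
    then show ?thesis
      using \<beta> by linarith
  qed
  show "(\<Sum>k. ennreal (log_term \<beta> p (real (k + N0) + 1) * real (k + N0) / (real (k + N0) + 1))) \<le> I"
    unfolding I using N0 p \<beta>' by (intro suminf_le nn_integral_ln_interval_bounds(1)) auto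
  show "I \<le> (\<Sum>k. ennreal (log_term \<beta> p (real (k + N0)) * (real (k + N0) + 1) / real (k + N0)))"
    unfolding I using N0 p \<beta>' by (intro suminf_le nn_integral_ln_interval_bounds(2)) auto
qed

definition upper_Gamma :: "real \<Rightarrow> real \<Rightarrow> real" where
  "upper_Gamma s c = enn2real (\<integral>\<^sup>+t. ennreal (t powr (s - 1) * exp (- t)) * indicator {c..} t \<partial>lborel)"

lemma upper_Gamma_bounds:
  assumes s: "0 < s" and c: "0 \<le> c"
  shows "(\<integral>\<^sup>+t. ennreal (t powr (s - 1) * exp (- t)) * indicator {c..} t \<partial>lborel) = ennreal (upper_Gamma s c)"
    and "upper_Gamma s c \<le> Gamma s"
    and "Gamma s \<le> upper_Gamma s c + c powr s / s"
proof -
  define g where "g t = ennreal (t powr (s - 1) * exp (- t))" for t :: real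
  have [measurable]: "g \<in> borel_measurable borel"
    unfolding g_def by measurable
  have "ennreal (Gamma s) = (\<integral>\<^sup>+t. ennreal (indicator {0..} t * t powr (s - 1) / exp t) \<partial>lborel)"
    using s by (rule Gamma_conv_nn_integral_real)
  also have "\<dots> = (\<integral>\<^sup>+t. g t * indicator {0..<c} t + g t * indicator {c..} t \<partial>lborel)"
    using c by (intro nn_integral_cong) (auto simp: g_def exp_minus divide_inverse split: split_indicator)
  also have "\<dots> = (\<integral>\<^sup>+t. g t * indicator {0..<c} t \<partial>lborel) + (\<integral>\<^sup>+t. g t * indicator {c..} t \<partial>lborel)"
    by (rule nn_integral_add) measurable
  finally have Gamma: "ennreal (Gamma s) = (\<integral>\<^sup>+t. g t * indicator {0..<c} t \<partial>lborel) + (\<integral>\<^sup>+t. g t * indicator {c..} t \<partial>lborel)" .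
  have "(\<integral>\<^sup>+t. g t * indicator {0..<c} t \<partial>lborel) \<le> (\<integral>\<^sup>+t. ennreal (t powr (s - 1)) * indicator {0..c} t \<partial>lborel)"
    by (intro nn_integral_mono) (auto simp: g_def intro!: ennreal_leI mult_left_le split: split_indicator)
  also have "\<dots> = ennreal (c powr s / s)"
    using nn_integral_has_integral_lebesgue'[OF _ has_integral_powr_from_0[of "s - 1" c]] s c by simp
  finally have head: "(\<integral>\<^sup>+t. g t * indicator {0..<c} t \<partial>lborel) \<le> ennreal (c powr s / s)" .
  have "(\<integral>\<^sup>+t. g t * indicator {c..} t \<partial>lborel) \<le> ennreal (Gamma s)"
    unfolding Gamma by (rule add_increasing) simp_all
  then have "(\<integral>\<^sup>+t. g t * indicator {c..} t \<partial>lborel) \<noteq> \<top>"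
    using ennreal_neq_top neq_top_trans by blast
  then have finite: "(\<integral>\<^sup>+t. g t * indicator {c..} t \<partial>lborel) = ennreal (upper_Gamma s c)"
    unfolding upper_Gamma_def g_def[symmetric] by (simp add: ennreal_enn2real_if)
  then show "(\<integral>\<^sup>+t. ennreal (t powr (s - 1) * exp (- t)) * indicator {c..} t \<partial>lborel) = ennreal (upper_Gamma s c)"
    by (simp add: g_def)
  have "0 \<le> upper_Gamma s c"
    by (simp add: upper_Gamma_def)
  have "ennreal (upper_Gamma s c) \<le> ennreal (Gamma s)"
    using \<open>(\<integral>\<^sup>+t. g t * indicator {c..} t \<partial>lborel) \<le> ennreal (Gamma s)\<close> by (simp only: finite)
  then show "upper_Gamma s c \<le> Gamma s"
    using Gamma_real_pos[OF s] by (subst (asm) ennreal_le_iff) auto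
  have "ennreal (Gamma s) \<le> ennreal (c powr s / s) + ennreal (upper_Gamma s c)"
    unfolding Gamma finite by (rule add_right_mono[OF head])
  also have "\<dots> = ennreal (c powr s / s + upper_Gamma s c)"
    using s c \<open>0 \<le> upper_Gamma s c\<close> by (intro ennreal_plus[symmetric]) simp_all
  finally show "Gamma s \<le> upper_Gamma s c + c powr s / s"
    using s c \<open>0 \<le> upper_Gamma s c\<close> by (subst (asm) ennreal_le_iff) auto
qed

lemma nn_integral_powr_exp_rescale:
  assumes p: "0 < p" and a: "0 \<le> a"
  shows "(\<integral>\<^sup>+u. ennreal (u powr \<beta> * exp (- p * u)) * indicator {a..} u \<partial>lborel)
       = ennreal (p powr (- 1 - \<beta>)) * (\<integral>\<^sup>+v. ennreal (v powr \<beta> * exp (- v)) * indicator {p * a..} v \<partial>lborel)"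
proof -
  define f where "f u = ennreal (u powr \<beta> * exp (- p * u)) * indicator {a..} u" for u :: real
  have [measurable]: "f \<in> borel_measurable borel"
    unfolding f_def by measurable
  have rescaled: "f (0 + 1 / p * v) = ennreal (p powr (- \<beta>)) * (ennreal (v powr \<beta> * exp (- v)) * indicator {p * a..} v)" for v
  proof (cases "p * a \<le> v")
    case True
    then have "0 \<le> v"
      using p a by (meson mult_nonneg_nonneg order_trans less_imp_le)
    then have "(v / p) powr \<beta> = v powr \<beta> / p powr \<beta>"
      using p by (simp add: powr_divide)
    then have "(v / p) powr \<beta> = p powr (- \<beta>) * v powr \<beta>"
      by (simp add: powr_minus divide_inverse)
    then show ?thesis
      using True p by (simp add: f_def le_divide_eq mult.commute ennreal_mult[symmetric] mult.left_commute)
  qed (use p in \<open>simp add: f_def le_divide_eq mult.commute\<close>)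
  have "(\<integral>\<^sup>+u. f u \<partial>lborel) = ennreal \<bar>1 / p\<bar> * (\<integral>\<^sup>+v. f (0 + 1 / p * v) \<partial>lborel)"
    using p by (intro nn_integral_real_affine) simp_all
  also have "\<dots> = ennreal (1 / p) * (\<integral>\<^sup>+v. ennreal (p powr (- \<beta>)) * (ennreal (v powr \<beta> * exp (- v)) * indicator {p * a..} v) \<partial>lborel)"
    using p by (simp only: rescaled abs_of_pos zero_less_divide_1_iff)
  also have "\<dots> = ennreal (1 / p) * ennreal (p powr (- \<beta>)) * (\<integral>\<^sup>+v. ennreal (v powr \<beta> * exp (- v)) * indicator {p * a..} v \<partial>lborel)"
    by (simp add: nn_integral_cmult mult.assoc)
  also have "ennreal (1 / p) * ennreal (p powr (- \<beta>)) = ennreal (p powr (- 1 - \<beta>))"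
    using p by (simp add: ennreal_mult[symmetric] powr_diff powr_minus divide_inverse)
  finally show ?thesis
    by (simp add: f_def)
qed

lemma summable_log_term_shift:
  assumes "0 < p"
  shows "summable (\<lambda>k. log_term \<beta> p (real (k + m)))"
  using summable_log_term[OF assms] by (subst summable_iff_shift[of "\<lambda>n. log_term \<beta> p (real n)"])

lemma log_term_shifted_sum_le:
  assumes "0 \<le> p" "1 \<le> m"
  shows "(\<Sum>k. log_term \<beta> (p + 1) (real (k + m))) \<le> (\<Sum>n. log_term \<beta> 1 (real n))"
proof -
  have "(\<Sum>k. log_term \<beta> (p + 1) (real (k + m))) \<le> (\<Sum>k. log_term \<beta> 1 (real (k + m)))"
    using assms by (intro suminf_le summable_log_term_shift log_term_antimono_exponent) auto
  also have "\<dots> \<le> (\<Sum>n. log_term \<beta> 1 (real n))"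
    using suminf_split_initial_segment[OF summable_log_term[of 1 \<beta>], of m]
    by (simp add: sum_nonneg log_term_nonneg)
  finally show ?thesis .
qed

text \<open>\<open>G\<close> is the integral of \<open>log_term \<beta> p\<close> over \<open>[N0, \<infinity>)\<close>, computed in the variable
  \<open>u = ln x\<close>; the error terms \<open>log_term \<beta> p x / x\<close> of the comparison appear as
  \<open>log_term \<beta> (p + 1) x\<close>.\<close>
lemma log_term_tail_vs_upper_Gamma:
  fixes N0 :: nat
  assumes \<beta>: "- 1 < \<beta>" and N0: "2 \<le> N0" and \<beta>N0: "\<beta> \<le> ln (real N0)" and p: "0 < p"
  defines "T \<equiv> \<Sum>k. log_term \<beta> p (real (k + N0))"
    and "G \<equiv> p powr (- 1 - \<beta>) * upper_Gamma (1 + \<beta>) (p * ln (real N0))"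
  shows "T - log_term \<beta> p (real N0) - (\<Sum>k. log_term \<beta> (p + 1) (real (k + Suc N0))) \<le> G"
    and "G \<le> T + (\<Sum>k. log_term \<beta> (p + 1) (real (k + N0)))"
proof -
  have sT: "summable (\<lambda>k. log_term \<beta> p (real (k + m)))"
    and sD: "summable (\<lambda>k. log_term \<beta> (p + 1) (real (k + m)))" for m
    using p by (intro summable_log_term_shift; simp)+
  have G: "0 \<le> G"
    unfolding G_def upper_Gamma_def by simp
  have T_nonneg: "0 \<le> T" and D_nonneg: "0 \<le> (\<Sum>k. log_term \<beta> (p + 1) (real (k + N0)))"
    unfolding T_def by (intro suminf_nonneg sT sD log_term_nonneg)+
  have upper_term: "log_term \<beta> p x * (x + 1) / x = log_term \<beta> p x + log_term \<beta> (p + 1) x" if "0 < x" for x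
  proof -
    have "log_term \<beta> p x * (x + 1) / x = log_term \<beta> p x * x / x + log_term \<beta> p x / x"
      by (simp add: distrib_left add_divide_distrib)
    then show ?thesis
      using that by (simp add: log_term_div)
  qed
  have lower_term: "log_term \<beta> p (x + 1) * x / (x + 1) = log_term \<beta> p (x + 1) - log_term \<beta> (p + 1) (x + 1)"
    if "0 \<le> x" for x
  proof -
    have "log_term \<beta> p (x + 1) * x / (x + 1) = log_term \<beta> p (x + 1) * (x + 1) / (x + 1) - log_term \<beta> p (x + 1) / (x + 1)"
      by (simp add: algebra_simps diff_divide_distrib add_divide_distrib)
    then show ?thesis
      using that by (simp add: log_term_div)
  qed
  have "(\<integral>\<^sup>+u. ennreal (u powr \<beta> * exp (- p * u)) * indicator {ln (real N0)..} u \<partial>lborel)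
      = ennreal (p powr (- 1 - \<beta>)) * (\<integral>\<^sup>+v. ennreal (v powr \<beta> * exp (- v)) * indicator {p * ln (real N0)..} v \<partial>lborel)"
    using p N0 by (intro nn_integral_powr_exp_rescale) auto
  also have "\<dots> = ennreal G"
    using upper_Gamma_bounds(1)[of "1 + \<beta>" "p * ln (real N0)"] \<beta> p N0
    by (simp add: G_def ennreal_mult')
  finally have I: "(\<integral>\<^sup>+u. ennreal (u powr \<beta> * exp (- p * u)) * indicator {ln (real N0)..} u \<partial>lborel) = ennreal G" .
  have "ennreal G \<le> (\<Sum>k. ennreal (log_term \<beta> p (real (k + N0)) * (real (k + N0) + 1) / real (k + N0)))"
    unfolding I[symmetric] using N0 \<beta>N0 p by (intro log_term_tail_integral_bounds(2)) auto
  also have "\<dots> = (\<Sum>k. ennreal (log_term \<beta> p (real (k + N0)) + log_term \<beta> (p + 1) (real (k + N0))))"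
    using N0 by (intro suminf_cong arg_cong[where f=ennreal] upper_term) simp
  also have "\<dots> = ennreal (T + (\<Sum>k. log_term \<beta> (p + 1) (real (k + N0))))"
    unfolding T_def suminf_add[OF sT sD]
    by (intro suminf_ennreal2 summable_add sT sD add_nonneg_nonneg log_term_nonneg)
  finally have "ennreal G \<le> ennreal (T + (\<Sum>k. log_term \<beta> (p + 1) (real (k + N0))))" .
  then show "G \<le> T + (\<Sum>k. log_term \<beta> (p + 1) (real (k + N0)))"
    using ennreal_le_iff[OF add_nonneg_nonneg[OF T_nonneg D_nonneg]] by blast
  have "T = log_term \<beta> p (real N0) + (\<Sum>k. log_term \<beta> p (real (k + Suc N0)))"
    unfolding T_def using suminf_split_head[OF sT[of N0]] by simp
  then have "T - log_term \<beta> p (real N0) - (\<Sum>k. log_term \<beta> (p + 1) (real (k + Suc N0)))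
      = (\<Sum>k. log_term \<beta> p (real (k + Suc N0)) - log_term \<beta> (p + 1) (real (k + Suc N0)))"
    using suminf_diff[OF sT[of "Suc N0"] sD[of "Suc N0"]] by simp
  then have "ennreal (T - log_term \<beta> p (real N0) - (\<Sum>k. log_term \<beta> (p + 1) (real (k + Suc N0))))
      = (\<Sum>k. ennreal (log_term \<beta> p (real (k + Suc N0)) - log_term \<beta> (p + 1) (real (k + Suc N0))))"
    by (simp only: suminf_ennreal2[OF _ summable_diff[OF sT sD]] log_term_antimono_exponent diff_ge_0_iff_ge)
  also have "\<dots> = (\<Sum>k. ennreal (log_term \<beta> p (real (k + N0) + 1) * real (k + N0) / (real (k + N0) + 1)))"
    by (intro suminf_cong arg_cong[where f=ennreal]) (subst lower_term; simp add: add_ac)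
  also have "\<dots> \<le> ennreal G"
    unfolding I[symmetric] using N0 \<beta>N0 p by (intro log_term_tail_integral_bounds(1)) auto
  finally show "T - log_term \<beta> p (real N0) - (\<Sum>k. log_term \<beta> (p + 1) (real (k + Suc N0))) \<le> G"
    using ennreal_le_iff[OF G] by blast
qed

lemma tendsto_powr_at_right_0:
  assumes "0 < a"
  shows "((\<lambda>p::real. p powr a) \<longlongrightarrow> 0) (at_right 0)"
proof (rule tendsto_zero_powrI[OF _ tendsto_const _ assms])
  show "((\<lambda>p::real. p) \<longlongrightarrow> 0) (at_right 0)"
    by (rule tendsto_ident_at)
  show "\<forall>\<^sub>F p in at_right (0::real). 0 \<le> p"
    using eventually_at_right_less[of "0::real"] by eventually_elim simp
qed

lemma tendsto_upper_Gamma: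
  assumes s: "0 < s" and c: "0 \<le> c"
  shows "((\<lambda>p. upper_Gamma s (p * c)) \<longlongrightarrow> Gamma s) (at_right 0)"
proof -
  have "((\<lambda>p. c powr s / s * p powr s) \<longlongrightarrow> 0) (at_right 0)"
    by (rule tendsto_mult_right_zero[OF tendsto_powr_at_right_0[OF s]])
  moreover have "\<forall>\<^sub>F p in at_right 0. norm (upper_Gamma s (p * c) - Gamma s) \<le> c powr s / s * p powr s"
  proof (rule eventually_at_rightI[where b=1])
    fix p :: real assume "p \<in> {0<..<1}"
    then have "c powr s / s * p powr s = (p * c) powr s / s"
      using c by (simp add: powr_mult)
    then show "norm (upper_Gamma s (p * c) - Gamma s) \<le> c powr s / s * p powr s"
      using upper_Gamma_bounds(2,3)[of s "p * c"] s c \<open>p \<in> {0<..<1}\<close> by (simp add: abs_le_iff)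
  qed simp
  ultimately have "((\<lambda>p. upper_Gamma s (p * c) - Gamma s) \<longlongrightarrow> 0) (at_right 0)"
    by (rule Lim_null_comparison[rotated])
  then show ?thesis
    by (simp add: LIM_zero_iff)
qed

lemma log_term_series_vs_upper_Gamma:
  fixes N0 :: nat
  assumes \<beta>: "- 1 < \<beta>" and N0: "2 \<le> N0" "\<beta> \<le> ln (real N0)"
    and K: "\<And>x p. 2 \<le> x \<Longrightarrow> 0 \<le> p \<Longrightarrow> log_term \<beta> p x \<le> K" and p: "0 < p"
  shows "\<bar>(\<Sum>k. log_term \<beta> p (real (k + 2))) - p powr (- 1 - \<beta>) * upper_Gamma (1 + \<beta>) (p * ln (real N0))\<bar>
    \<le> real N0 * K + K + (\<Sum>n. log_term \<beta> 1 (real n))"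
proof -
  define T where "T = (\<Sum>k. log_term \<beta> p (real (k + N0)))"
  define F where "F = (\<Sum>i<N0 - 2. log_term \<beta> p (real (i + 2)))"
  have "(\<Sum>k. log_term \<beta> p (real (k + 2))) = (\<Sum>k. log_term \<beta> p (real (k + (N0 - 2) + 2))) + F"
    unfolding F_def using p by (intro suminf_split_initial_segment summable_log_term_shift)
  also have "(\<lambda>k. log_term \<beta> p (real (k + (N0 - 2) + 2))) = (\<lambda>k. log_term \<beta> p (real (k + N0)))"
    using N0 by (simp add: algebra_simps)
  finally have split: "(\<Sum>k. log_term \<beta> p (real (k + 2))) = T + F"
    by (simp add: T_def)
  have F: "0 \<le> F" "F \<le> real N0 * K"
  proof -
    show "0 \<le> F"
      unfolding F_def by (intro sum_nonneg log_term_nonneg)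
    have "F \<le> (\<Sum>i<N0 - 2. K)"
      unfolding F_def using p by (intro sum_mono K) auto
    also have "\<dots> \<le> real N0 * K"
      using K[of 2 p] p log_term_nonneg[of \<beta> p 2] by (simp add: mult_right_mono)
    finally show "F \<le> real N0 * K" .
  qed
  have D: "(\<Sum>k. log_term \<beta> (p + 1) (real (k + m))) \<le> (\<Sum>n. log_term \<beta> 1 (real n))"
    "0 \<le> (\<Sum>k. log_term \<beta> (p + 1) (real (k + m)))" if "1 \<le> m" for m
  proof -
    show "(\<Sum>k. log_term \<beta> (p + 1) (real (k + m))) \<le> (\<Sum>n. log_term \<beta> 1 (real n))"
      using p that by (intro log_term_shifted_sum_le) auto
    show "0 \<le> (\<Sum>k. log_term \<beta> (p + 1) (real (k + m)))"
      using p by (intro suminf_nonneg summable_log_term_shift log_term_nonneg) auto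
  qed
  have "0 \<le> log_term \<beta> p (real N0)" "log_term \<beta> p (real N0) \<le> K"
    using N0 p by (auto intro!: K log_term_nonneg)
  then show ?thesis
    using log_term_tail_vs_upper_Gamma[OF \<beta> N0 p] F D[of N0] D[of "Suc N0"] N0
    unfolding split T_def by (simp add: abs_le_iff)
qed

lemma log_term_series_asymptotic:
  assumes \<beta>: "- 1 < \<beta>"
  shows "((\<lambda>p. p powr (1 + \<beta>) * (\<Sum>k. log_term \<beta> p (real (k + 2)))) \<longlongrightarrow> Gamma (1 + \<beta>)) (at_right 0)"
proof -
  obtain n :: nat where n: "exp \<beta> \<le> real n"
    using real_arch_simple by blast
  define N0 where "N0 = max n 2"
  have N0: "2 \<le> N0" "\<beta> \<le> ln (real N0)"
    using n by (auto simp: N0_def ln_ge_iff intro: order_trans)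
  obtain K where K: "\<And>x p. 2 \<le> x \<Longrightarrow> 0 \<le> p \<Longrightarrow> log_term \<beta> p x \<le> K"
    using log_term_bounded[of \<beta>] by blast
  define C where "C = real N0 * K + K + (\<Sum>n. log_term \<beta> 1 (real n))"
  define G where "G p = upper_Gamma (1 + \<beta>) (p * ln (real N0))" for p
  have "norm (p powr (1 + \<beta>) * (\<Sum>k. log_term \<beta> p (real (k + 2))) - G p) \<le> C * p powr (1 + \<beta>)"
    if p: "0 < p" for p
  proof -
    have "p powr (1 + \<beta>) * (p powr (- 1 - \<beta>) * G p) = G p"
      using p by (simp add: powr_add[symmetric])
    then have "p powr (1 + \<beta>) * (\<Sum>k. log_term \<beta> p (real (k + 2))) - G p
        = p powr (1 + \<beta>) * ((\<Sum>k. log_term \<beta> p (real (k + 2))) - p powr (- 1 - \<beta>) * G p)"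
      by (simp add: right_diff_distrib)
    also have "norm \<dots> \<le> p powr (1 + \<beta>) * C"
      unfolding real_norm_def abs_mult abs_of_nonneg[OF powr_ge_zero] C_def G_def
      by (rule mult_left_mono[OF log_term_series_vs_upper_Gamma[OF \<beta> N0 K p] powr_ge_zero])
    finally show ?thesis
      by (simp add: mult.commute)
  qed
  then have "((\<lambda>p. p powr (1 + \<beta>) * (\<Sum>k. log_term \<beta> p (real (k + 2))) - G p) \<longlongrightarrow> 0) (at_right 0)"
    using \<beta> by (intro Lim_null_comparison[OF eventually_at_rightI[where b=1]
        tendsto_mult_right_zero[OF tendsto_powr_at_right_0]]) auto
  moreover have "(G \<longlongrightarrow> Gamma (1 + \<beta>)) (at_right 0)"
    unfolding G_def[abs_def] using \<beta> N0 by (intro tendsto_upper_Gamma) auto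
  ultimately have "((\<lambda>p. (p powr (1 + \<beta>) * (\<Sum>k. log_term \<beta> p (real (k + 2))) - G p) + G p)
      \<longlongrightarrow> 0 + Gamma (1 + \<beta>)) (at_right 0)"
    by (rule tendsto_add)
  then show ?thesis
    by simp
qed

section \<open>The normalised log-weighted series\<close>

lemma weak_conv_filter_at_right_if_char_tendsto:
  fixes Ms :: "real \<Rightarrow> real measure" and N :: "real measure"
  assumes Ms: "\<And>s. real_distribution (Ms s)" and N: "real_distribution N"
    and char: "\<And>t. ((\<lambda>s. char (Ms s) t) \<longlongrightarrow> char N t) (at_right a)"
  shows "weak_conv_filter Ms N (at_right a)"
  unfolding weak_conv_filter_def
proof (intro allI impI)
  fix x assume cont: "isCont (cdf N) x"
  show "((\<lambda>s. cdf (Ms s) x) \<longlongrightarrow> cdf N x) (at_right a)"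
  proof (rule tendsto_at_right_sequentially[of a "a + 1"])
    fix S :: "nat \<Rightarrow> real"
    assume "\<And>n. a < S n" "S \<longlonglongrightarrow> a"
    then have S: "filterlim S (at_right a) sequentially"
      by (auto simp: filterlim_at intro!: always_eventually)
    have "weak_conv_m (\<lambda>n. Ms (S n)) N"
      by (rule levy_continuity[OF Ms N filterlim_compose[OF char S]])
    then show "(\<lambda>n. cdf (Ms (S n)) x) \<longlonglongrightarrow> cdf N x"
      using cont unfolding weak_conv_m_def weak_conv_def by blast
  qed simp
qed

definition log_weight :: "real \<Rightarrow> real \<Rightarrow> nat \<Rightarrow> real" where
  "log_weight \<alpha> s k = ln (real (k + 2)) powr \<alpha> / real (k + 2) powr (1 / 2 + s)"

lemma log_weight_square: "(log_weight \<alpha> s k)\<^sup>2 = log_term (2 * \<alpha>) (2 * s) (real (k + 2))"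
proof -
  have "(x powr a)\<^sup>2 = x powr (2 * a)" for x a :: real
    by (simp add: power2_eq_square powr_add[symmetric])
  then show ?thesis
    unfolding log_weight_def log_term_def by (simp add: power_divide algebra_simps)
qed

lemma log_weight_bounded: "\<exists>K. \<forall>s\<ge>0. \<forall>k. \<bar>log_weight \<alpha> s k\<bar> \<le> K"
proof -
  obtain K where K: "\<And>x p. 2 \<le> x \<Longrightarrow> 0 \<le> p \<Longrightarrow> log_term (2 * \<alpha>) p x \<le> K"
    using log_term_bounded[of "2 * \<alpha>"] by blast
  have "\<bar>log_weight \<alpha> s k\<bar> \<le> sqrt K" if "0 \<le> s" for s k
  proof -
    have "(log_weight \<alpha> s k)\<^sup>2 \<le> K"
      unfolding log_weight_square using K[of "real (k + 2)" "2 * s"] that by simp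
    then show ?thesis
      by (intro real_le_rsqrt) simp
  qed
  then show ?thesis
    by blast
qed

lemma eventually_summable_log_weight_square:
  "\<forall>\<^sub>F s in at_right 0. summable (\<lambda>k. (log_weight \<alpha> s k)\<^sup>2)"
  using eventually_at_right_less[of "0::real"]
  by eventually_elim (unfold log_weight_square, intro summable_log_term_shift, simp)

definition log_normalizer :: "real \<Rightarrow> real \<Rightarrow> real \<Rightarrow> real" where
  "log_normalizer \<alpha> \<sigma>2 s = sqrt ((2 * s) powr (1 + 2 * \<alpha>) / (Gamma (1 + 2 * \<alpha>) * \<sigma>2))"

lemma log_normalizer_nonneg:
  assumes "- 1 / 2 < \<alpha>" "0 < \<sigma>2"
  shows "0 \<le> log_normalizer \<alpha> \<sigma>2 s"
  unfolding log_normalizer_def using assms Gamma_real_pos[of "1 + 2 * \<alpha>"] by simp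

lemma log_normalizer_tendsto_0:
  assumes "- 1 / 2 < \<alpha>" "0 < \<sigma>2"
  shows "(log_normalizer \<alpha> \<sigma>2 \<longlongrightarrow> 0) (at_right 0)"
proof -
  have "((\<lambda>s::real. 2 * s) \<longlongrightarrow> 2 * 0) (at_right 0)"
    by (intro tendsto_intros)
  then have "((\<lambda>s::real. (2 * s) powr (1 + 2 * \<alpha>)) \<longlongrightarrow> 0) (at_right 0)"
    using assms eventually_at_right_less[of "0::real"]
    by (intro tendsto_zero_powrI[OF _ tendsto_const]) (auto elim: eventually_mono)
  moreover have "0 < Gamma (1 + 2 * \<alpha>)"
    using assms by (intro Gamma_real_pos) simp
  then have "0 < Gamma (1 + 2 * \<alpha>) * \<sigma>2"
    using assms(2) by (rule mult_pos_pos)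
  then have "Gamma (1 + 2 * \<alpha>) * \<sigma>2 \<noteq> 0"
    by linarith
  ultimately have "(log_normalizer \<alpha> \<sigma>2 \<longlongrightarrow> sqrt (0 / (Gamma (1 + 2 * \<alpha>) * \<sigma>2))) (at_right 0)"
    unfolding log_normalizer_def[abs_def] by (intro tendsto_intros)
  then show ?thesis
    by simp
qed

lemma log_normalized_weights_small:
  assumes "- 1 / 2 < \<alpha>" "0 < \<sigma>2"
  shows "\<exists>\<delta>. (\<delta> \<longlongrightarrow> 0) (at_right 0)
    \<and> (\<forall>\<^sub>F s in at_right 0. \<forall>k. \<bar>log_normalizer \<alpha> \<sigma>2 s * log_weight \<alpha> s k\<bar> \<le> \<delta> s)"
proof -
  obtain K where K: "\<And>s k. 0 \<le> s \<Longrightarrow> \<bar>log_weight \<alpha> s k\<bar> \<le> K"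
    using log_weight_bounded[of \<alpha>] by blast
  have "\<forall>\<^sub>F s in at_right 0. \<forall>k. \<bar>log_normalizer \<alpha> \<sigma>2 s * log_weight \<alpha> s k\<bar> \<le> log_normalizer \<alpha> \<sigma>2 s * K"
    using eventually_at_right_less[of "0::real"]
  proof eventually_elim
    case (elim s)
    then show ?case
      using K[of s] log_normalizer_nonneg[OF assms, of s] by (simp add: abs_mult mult_left_mono)
  qed
  moreover have "((\<lambda>s. log_normalizer \<alpha> \<sigma>2 s * K) \<longlongrightarrow> 0) (at_right 0)"
    using tendsto_mult_left_zero[OF log_normalizer_tendsto_0[OF assms]] .
  ultimately show ?thesis
    by blast
qed

lemma log_weight_normalized_variance:
  assumes \<alpha>: "- 1 / 2 < \<alpha>" and \<sigma>2: "0 < \<sigma>2"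
  shows "((\<lambda>s. (log_normalizer \<alpha> \<sigma>2 s)\<^sup>2 * \<sigma>2 * (\<Sum>k. (log_weight \<alpha> s k)\<^sup>2)) \<longlongrightarrow> 1) (at_right 0)"
proof -
  have Gamma: "0 < Gamma (1 + 2 * \<alpha>)"
    using \<alpha> by (intro Gamma_real_pos) simp
  have "((\<lambda>s::real. 2 * s) \<longlongrightarrow> 2 * 0) (at_right 0)"
    by (intro tendsto_intros)
  moreover have "\<forall>\<^sub>F s in at_right (0::real). 2 * s \<in> {0<..} \<and> 2 * s \<noteq> 0"
    using eventually_at_right_less[of "0::real"] by eventually_elim auto
  ultimately have double: "filterlim (\<lambda>s::real. 2 * s) (at_right 0) (at_right 0)"
    by (simp add: filterlim_at)
  have "((\<lambda>s. (2 * s) powr (1 + 2 * \<alpha>) * (\<Sum>k. log_term (2 * \<alpha>) (2 * s) (real (k + 2))))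
      \<longlongrightarrow> Gamma (1 + 2 * \<alpha>)) (at_right 0)"
    using filterlim_compose[OF log_term_series_asymptotic double, of "2 * \<alpha>"] \<alpha> by simp
  then have "((\<lambda>s. (2 * s) powr (1 + 2 * \<alpha>) * (\<Sum>k. log_term (2 * \<alpha>) (2 * s) (real (k + 2)))
      / Gamma (1 + 2 * \<alpha>)) \<longlongrightarrow> 1) (at_right 0)"
    using Gamma tendsto_divide[OF _ tendsto_const, of _ "Gamma (1 + 2 * \<alpha>)" _ "Gamma (1 + 2 * \<alpha>)"] by simp
  then show ?thesis
    using Gamma \<sigma>2 by (simp add: log_normalizer_def log_weight_square)
qed

theorem corollary2p4:
  fixes M :: "'a measure" and \<eta> :: "nat \<Rightarrow> 'a \<Rightarrow> real" and \<alpha> :: real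
  assumes "prob_space M"
    and meas: "\<And>k. \<eta> k \<in> borel_measurable M"
    and indep: "prob_space.indep_vars M (\<lambda>_. borel) \<eta> UNIV"
    and ident: "\<And>k. distr M borel (\<eta> k) = distr M borel (\<eta> 0)"
    and int1: "integrable M (\<eta> 0)"
    and int2: "integrable M (\<lambda>\<omega>. (\<eta> 0 \<omega>)\<^sup>2)"
    and mean0: "integral\<^sup>L M (\<eta> 0) = 0"
    and var_pos: "integral\<^sup>L M (\<lambda>\<omega>. (\<eta> 0 \<omega>)\<^sup>2) > 0"
    and alpha: "\<alpha> > - 1 / 2"
  shows "weak_conv_filter
           (\<lambda>s. distr M borel
              (\<lambda>\<omega>. sqrt ((2 * s) powr (1 + 2 * \<alpha>) /
                          (Gamma (1 + 2 * \<alpha>) * integral\<^sup>L M (\<lambda>\<omega>'. (\<eta> 0 \<omega>')\<^sup>2))) *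
                    (\<Sum>k. (ln (real (k + 2))) powr \<alpha> / real (k + 2) powr (1 / 2 + s)
                           * \<eta> (k + 2) \<omega>)))
           (density lborel std_normal_density)
           (at_right 0)"
proof -
  interpret prob_space M by fact
  define \<sigma>2 where "\<sigma>2 = integral\<^sup>L M (\<lambda>\<omega>. (\<eta> 0 \<omega>)\<^sup>2)"
  have \<sigma>2: "0 < \<sigma>2"
    using var_pos by (simp add: \<sigma>2_def)
  obtain \<delta> where \<delta>: "(\<delta> \<longlongrightarrow> 0) (at_right 0)"
    and small: "\<forall>\<^sub>F s in at_right 0. \<forall>k. \<bar>log_normalizer \<alpha> \<sigma>2 s * log_weight \<alpha> s k\<bar> \<le> \<delta> s"
    using log_normalized_weights_small[OF alpha \<sigma>2] by blast
  have moments: "integrable (distr M borel (\<eta> 0)) (\<lambda>x. x)" "integrable (distr M borel (\<eta> 0)) (\<lambda>x. x\<^sup>2)"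
    "(LINT x|distr M borel (\<eta> 0). x) = 0" "(LINT x|distr M borel (\<eta> 0). x\<^sup>2) = \<sigma>2"
    using int1 int2 mean0 meas by (simp_all add: \<sigma>2_def integrable_distr_eq integral_distr)
  have "((\<lambda>s. char (distr M borel (\<lambda>\<omega>. log_normalizer \<alpha> \<sigma>2 s * (\<Sum>k. log_weight \<alpha> s k * \<eta> (k + 2) \<omega>))) t)
      \<longlongrightarrow> char std_normal_distribution t) (at_right 0)" for t
    by (rule char_scaled_weighted_series_tendsto_normal[OF indep_vars_shift[OF indep] ident moments \<sigma>2
          eventually_summable_log_weight_square small \<delta> log_weight_normalized_variance[OF alpha \<sigma>2]])
  then show ?thesis
    using meas unfolding \<sigma>2_def log_normalizer_def log_weight_def
    by (intro weak_conv_filter_at_right_if_char_tendsto real_distribution_distr real_dist_normal_dist) simp_all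
qed

end
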